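(* Let $A$ be an $N\times N$ $\{0,1\}$-matrix with no zero row and no zero column, let $\tau=(\tau_+,\tau_-)$ be a comparable pair of functions $\mathcal{V}_A\to\Omega_A$ and $s\in(0,1]$. Then $BP^{\exp}(\tau)$ and $BP_s(\tau)$ are even unbounded Fredholm modules over $C(\Omega_A)$. For $s\geq 1/2$, $BP_s(\tau)$ is $\theta$-summable, whereas $BP^{\exp}(\tau)$ is finitely summable. If $\tau_+(\mathcal{V}_A)\cup\tau_-(\mathcal{V}_A)$ is dense in $\Omega_A$, these unbounded Fredholm modules are spectral triples.
   Context: $\mathcal{V}_A$ is the set of admissible finite words $\mu_1\cdots\mu_k$ ($A_{\mu_j\mu_{j+1}}=1$) including the empty word, $|\mu|$ the length; $\Omega_A$ the compact space of infinite admissible sequences with metric $d(x,y)=e^{-\min\{n:x_n\neq y_n\}}$ ($x\ne y$), and $C_\mu$ the cylinder set of sequences beginning with $\mu$. A pair $\tau=(\tau_+,\tau_-)$ of functions $\mathcal{V}_A\to\Omega_A$ is comparable if there is $C>0$ with $d(\tau_+(\mu),\tau_-(\mu))\le C\,\mathrm{diam}(C_\mu)$ for all $\mu$. For $\mathfrak{t}:\mathcal{V}_A\to\Omega_A$, $\pi_{\mathfrak t}:C(\Omega_A)\to\mathbb{B}(\ell^2(\mathcal{V}_A))$ is $\pi_{\mathfrak t}(f)\delta_\mu=f(\mathfrak t(\mu))\delta_\mu$. $BP_s(\tau)=(\pi_\tau,\ell^2(\mathcal{V}_A,\mathbb{C}^2),D_{\mathcal{V},s})$ with $\ell^2(\mathcal{V}_A,\mathbb{C}^2)=\ell^2(\mathcal{V}_A)\oplus\ell^2(\mathcal{V}_A)$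 graded by this decomposition, $\pi_\tau=\pi_{\tau_+}\oplus\pi_{\tau_-}$, and $D_{\mathcal{V},s}(\phi_+,\phi_-)(\mu)=|\mu|^s(\phi_-(\mu),\phi_+(\mu))$ (closure from finitely supported functions); $BP^{\exp}(\tau)$ is the same with $|\mu|^s$ replaced by $e^{|\mu|}$. An even unbounded Fredholm module $(\pi,\mathcal{H},D)$ over $B$: graded $\mathcal{H}$, even representation, odd self-adjoint $D$ with $\pi(b)(D\pm i)^{-1}$ compact and $\{b:\pi(b)\mathrm{Dom}D\subseteq\mathrm{Dom}D,\ [D,\pi(b)]\text{ bounded}\}$ dense; a spectral triple if moreover $\pi$ is faithful. It is $p$-summable if $\pi(b)(D\pm i)^{-1}\in\mathcal{L}^p$ for $b$ in a dense subalgebra of that Lipschitz algebra, finitely summable if $p$-summable for some $p$, and $\theta$-summable if instead $\pi(b)(D\pm i)^{-1}\in\mathrm{Li}^{1/2}$ (singular values $O(\log(k)^{-1/2})$). *)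

theory Defs
  imports "HOL-Analysis.Analysis" "HOL-Library.Landau_Symbols"
begin

text \<open>Words and sequences are indexed from 0, but the
  metric uses the paper's 1-based positions.\<close>

definition admissible :: "(nat \<Rightarrow> nat \<Rightarrow> bool) \<Rightarrow> nat \<Rightarrow> nat list \<Rightarrow> bool" where
  "admissible A N \<mu> \<longleftrightarrow> (\<forall>a\<in>set \<mu>. a < N) \<and>
     (\<forall>j. Suc j < length \<mu> \<longrightarrow> A (\<mu> ! j) (\<mu> ! Suc j))"

definition words :: "(nat \<Rightarrow> nat \<Rightarrow> bool) \<Rightarrow> nat \<Rightarrow> nat list set" where
  "words A N = {\<mu>. admissible A N \<mu>}"

definition Omega :: "(nat \<Rightarrow> nat \<Rightarrow> bool) \<Rightarrow> nat \<Rightarrow> (nat \<Rightarrow> nat) set" where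
  "Omega A N = {x. (\<forall>n. x n < N) \<and> (\<forall>n. A (x n) (x (Suc n)))}"

definition seqdist :: "(nat \<Rightarrow> nat) \<Rightarrow> (nat \<Rightarrow> nat) \<Rightarrow> real" where
  "seqdist x y = (if x = y then 0 else exp (- (real (LEAST n. x n \<noteq> y n) + 1)))"

definition cyl :: "(nat \<Rightarrow> nat \<Rightarrow> bool) \<Rightarrow> nat \<Rightarrow> nat list \<Rightarrow> (nat \<Rightarrow> nat) set" where
  "cyl A N \<mu> = {x \<in> Omega A N. \<forall>j<length \<mu>. x j = \<mu> ! j}"

definition sdiam :: "(nat \<Rightarrow> nat) set \<Rightarrow> real" where
  "sdiam S = (if S = {} then 0 else Sup {seqdist x y | x y. x \<in> S \<and> y \<in> S})"

definition comparable ::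
  "(nat \<Rightarrow> nat \<Rightarrow> bool) \<Rightarrow> nat \<Rightarrow> (nat list \<Rightarrow> nat \<Rightarrow> nat) \<Rightarrow> (nat list \<Rightarrow> nat \<Rightarrow> nat) \<Rightarrow> bool" where
  "comparable A N tp tm \<longleftrightarrow> (\<exists>C>0. \<forall>\<mu>\<in>words A N.
      seqdist (tp \<mu>) (tm \<mu>) \<le> C * sdiam (cyl A N \<mu>))"

definition Cont :: "(nat \<Rightarrow> nat \<Rightarrow> bool) \<Rightarrow> nat \<Rightarrow> ((nat \<Rightarrow> nat) \<Rightarrow> complex) set" where
  "Cont A N = {f. \<forall>x\<in>Omega A N. \<forall>e>0. \<exists>d>0. \<forall>y\<in>Omega A N.
      seqdist x y < d \<longrightarrow> cmod (f y - f x) < e}"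

definition sdense_in :: "(nat \<Rightarrow> nat) set \<Rightarrow> (nat \<Rightarrow> nat) set \<Rightarrow> bool" where
  "sdense_in S X \<longleftrightarrow> (\<forall>x\<in>X. \<forall>e>0. \<exists>y\<in>S. seqdist x y < e)"

definition l2 :: "'i set \<Rightarrow> ('i \<Rightarrow> complex) set" where
  "l2 I = {\<phi>. (\<forall>x. x \<notin> I \<longrightarrow> \<phi> x = 0) \<and> (\<lambda>x. (cmod (\<phi> x))\<^sup>2) summable_on UNIV}"

definition l2_norm :: "('i \<Rightarrow> complex) \<Rightarrow> real" where
  "l2_norm \<phi> = sqrt (infsum (\<lambda>x. (cmod (\<phi> x))\<^sup>2) UNIV)"

definition l2_inner :: "('i \<Rightarrow> complex) \<Rightarrow> ('i \<Rightarrow> complex) \<Rightarrow> complex" where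
  "l2_inner \<phi> \<psi> = infsum (\<lambda>x. \<phi> x * cnj (\<psi> x)) UNIV"

definition l2_conv :: "(nat \<Rightarrow> 'i \<Rightarrow> complex) \<Rightarrow> ('i \<Rightarrow> complex) \<Rightarrow> bool" where
  "l2_conv f \<phi> \<longleftrightarrow> (\<lambda>n. l2_norm (\<lambda>x. f n x - \<phi> x)) \<longlonglongrightarrow> 0"

type_synonym 'i hop = "('i \<Rightarrow> complex) \<Rightarrow> ('i \<Rightarrow> complex)"

definition bdd_op :: "('i \<Rightarrow> complex) set \<Rightarrow> 'i hop \<Rightarrow> bool" where
  "bdd_op H T \<longleftrightarrow> (\<forall>\<phi>\<in>H. T \<phi> \<in> H) \<and>
     (\<forall>\<phi>\<in>H. \<forall>\<psi>\<in>H. \<forall>a. T (\<lambda>x. a * \<phi> x + \<psi> x) = (\<lambda>x. a * T \<phi> x + T \<psi> x)) \<and>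
     (\<exists>K. \<forall>\<phi>\<in>H. l2_norm (T \<phi>) \<le> K * l2_norm \<phi>)"

definition hop_norm :: "('i \<Rightarrow> complex) set \<Rightarrow> 'i hop \<Rightarrow> real" where
  "hop_norm H T = Sup {l2_norm (T \<phi>) | \<phi>. \<phi> \<in> H \<and> l2_norm \<phi> \<le> 1}"

definition cpt_op :: "('i \<Rightarrow> complex) set \<Rightarrow> 'i hop \<Rightarrow> bool" where
  "cpt_op H T \<longleftrightarrow> bdd_op H T \<and>
     (\<forall>f::nat \<Rightarrow> 'i \<Rightarrow> complex. (\<forall>n. f n \<in> H) \<and> bounded (range (\<lambda>n. l2_norm (f n))) \<longrightarrow>
        (\<exists>r \<psi>. strict_mono r \<and> \<psi> \<in> H \<and> l2_conv (\<lambda>n. T (f (r n))) \<psi>))"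

definition rank_le_op :: "('i \<Rightarrow> complex) set \<Rightarrow> nat \<Rightarrow> 'i hop \<Rightarrow> bool" where
  "rank_le_op H k F \<longleftrightarrow> bdd_op H F \<and>
     (\<exists>vs. length vs \<le> k \<and> set vs \<subseteq> H \<and>
        (\<forall>\<phi>\<in>H. \<exists>c. F \<phi> = (\<lambda>x. \<Sum>j<length vs. c j * (vs ! j) x)))"

text \<open>k-th singular value (k = 0,1,2,...), as the approximation number
  s_k(T) = inf { ||T - F|| : rank F \<le> k }.\<close>
definition sing_val :: "('i \<Rightarrow> complex) set \<Rightarrow> 'i hop \<Rightarrow> nat \<Rightarrow> real" where
  "sing_val H T k = Inf {hop_norm H (\<lambda>\<phi> x. T \<phi> x - F \<phi> x) | F. rank_le_op H k F}"

definition schatten :: "('i \<Rightarrow> complex) set \<Rightarrow> real \<Rightarrow> 'i hop \<Rightarrow> bool" where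
  "schatten H p T \<longleftrightarrow> cpt_op H T \<and> summable (\<lambda>k. sing_val H T k powr p)"

definition Li_half :: "('i \<Rightarrow> complex) set \<Rightarrow> 'i hop \<Rightarrow> bool" where
  "Li_half H T \<longleftrightarrow> cpt_op H T \<and>
     (\<lambda>k. sing_val H T k) \<in> O(\<lambda>k. ln (real k) powr (-1/2))"

definition self_adjoint :: "('i \<Rightarrow> complex) set \<Rightarrow> ('i \<Rightarrow> complex) set \<Rightarrow> 'i hop \<Rightarrow> bool" where
  "self_adjoint H Dom D \<longleftrightarrow> Dom \<subseteq> H \<and> (\<forall>\<phi>\<in>Dom. D \<phi> \<in> H) \<and>
     (\<forall>\<phi>\<in>Dom. \<forall>\<psi>\<in>Dom. \<forall>a. (\<lambda>x. a * \<phi> x + \<psi> x) \<in> Dom \<and>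
         D (\<lambda>x. a * \<phi> x + \<psi> x) = (\<lambda>x. a * D \<phi> x + D \<psi> x)) \<and>
     (\<forall>\<phi>\<in>H. \<exists>f. (\<forall>n. f n \<in> Dom) \<and> l2_conv f \<phi>) \<and>
     (\<forall>\<eta>\<in>H. \<eta> \<in> Dom \<longleftrightarrow> (\<exists>\<zeta>\<in>H. \<forall>\<phi>\<in>Dom. l2_inner (D \<phi>) \<eta> = l2_inner \<phi> \<zeta>)) \<and>
     (\<forall>\<eta>\<in>Dom. \<forall>\<phi>\<in>Dom. l2_inner (D \<phi>) \<eta> = l2_inner \<phi> (D \<eta>))"

definition resolvent :: "('i \<Rightarrow> complex) set \<Rightarrow> 'i hop \<Rightarrow> complex \<Rightarrow> 'i hop" where
  "resolvent Dom D l \<phi> = (THE \<psi>. \<psi> \<in> Dom \<and> (\<lambda>x. D \<psi> x + l * \<psi> x) = \<phi>)"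

definition closure_dom :: "('i \<Rightarrow> complex) set \<Rightarrow> ('i \<Rightarrow> complex) set \<Rightarrow> 'i hop \<Rightarrow> ('i \<Rightarrow> complex) set" where
  "closure_dom H Dom0 D0 = {\<phi> \<in> H. \<exists>f \<psi>. (\<forall>n. f n \<in> Dom0) \<and> l2_conv f \<phi> \<and> \<psi> \<in> H \<and>
       l2_conv (\<lambda>n. D0 (f n)) \<psi>}"

definition closure_op :: "('i \<Rightarrow> complex) set \<Rightarrow> ('i \<Rightarrow> complex) set \<Rightarrow> 'i hop \<Rightarrow> 'i hop" where
  "closure_op H Dom0 D0 \<phi> = (THE \<psi>. \<exists>f. (\<forall>n. f n \<in> Dom0) \<and> l2_conv f \<phi> \<and> \<psi> \<in> H \<and>
       l2_conv (\<lambda>n. D0 (f n)) \<psi>)"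

text \<open>Grading: gam x = True means x lies in the even part.\<close>
definition grade :: "('i \<Rightarrow> bool) \<Rightarrow> 'i hop" where
  "grade gam \<phi> = (\<lambda>x. if gam x then \<phi> x else - \<phi> x)"

definition star_rep :: "(('x \<Rightarrow> complex) set) \<Rightarrow> 'x set \<Rightarrow> ('i \<Rightarrow> complex) set \<Rightarrow>
    (('x \<Rightarrow> complex) \<Rightarrow> 'i hop) \<Rightarrow> bool" where
  "star_rep B X H \<pi> \<longleftrightarrow>
     (\<forall>b\<in>B. bdd_op H (\<pi> b)) \<and>
     (\<forall>b\<in>B. \<forall>c\<in>B. (\<forall>x\<in>X. b x = c x) \<longrightarrow> (\<forall>\<phi>\<in>H. \<pi> b \<phi> = \<pi> c \<phi>)) \<and>
     (\<forall>b\<in>B. \<forall>c\<in>B. \<forall>\<phi>\<in>H. \<pi> (\<lambda>x. b x + c x) \<phi> = (\<lambda>i. \<pi> b \<phi> i + \<pi> c \<phi> i)) \<and>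
     (\<forall>b\<in>B. \<forall>a. \<forall>\<phi>\<in>H. \<pi> (\<lambda>x. a * b x) \<phi> = (\<lambda>i. a * \<pi> b \<phi> i)) \<and>
     (\<forall>b\<in>B. \<forall>c\<in>B. \<forall>\<phi>\<in>H. \<pi> (\<lambda>x. b x * c x) \<phi> = \<pi> b (\<pi> c \<phi>)) \<and>
     (\<forall>b\<in>B. \<forall>\<phi>\<in>H. \<forall>\<psi>\<in>H. l2_inner (\<pi> b \<phi>) \<psi> = l2_inner \<phi> (\<pi> (\<lambda>x. cnj (b x)) \<psi>))"

definition fdense_in :: "(('x \<Rightarrow> complex) set) \<Rightarrow> (('x \<Rightarrow> complex) set) \<Rightarrow> 'x set \<Rightarrow> bool" where
  "fdense_in S B X \<longleftrightarrow> (\<forall>f\<in>B. \<forall>e>0. \<exists>g\<in>S. \<forall>x\<in>X. cmod (f x - g x) < e)"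

definition subalgebra :: "(('x \<Rightarrow> complex) set) \<Rightarrow> bool" where
  "subalgebra S \<longleftrightarrow> (\<forall>b\<in>S. \<forall>c\<in>S. (\<lambda>x. b x + c x) \<in> S \<and> (\<lambda>x. b x * c x) \<in> S) \<and>
     (\<forall>b\<in>S. \<forall>a. (\<lambda>x. a * b x) \<in> S)"

definition lip_alg :: "(('x \<Rightarrow> complex) set) \<Rightarrow> (('x \<Rightarrow> complex) \<Rightarrow> 'i hop) \<Rightarrow>
    ('i \<Rightarrow> complex) set \<Rightarrow> 'i hop \<Rightarrow> ('x \<Rightarrow> complex) set" where
  "lip_alg B \<pi> Dom D = {b\<in>B. (\<forall>\<phi>\<in>Dom. \<pi> b \<phi> \<in> Dom) \<and>
     (\<exists>K. \<forall>\<phi>\<in>Dom. l2_norm (\<lambda>i. D (\<pi> b \<phi>) i - \<pi> b (D \<phi>) i) \<le> K * l2_norm \<phi>)}"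

definition even_ufm :: "(('x \<Rightarrow> complex) set) \<Rightarrow> 'x set \<Rightarrow> 'i set \<Rightarrow> ('i \<Rightarrow> bool) \<Rightarrow>
    (('x \<Rightarrow> complex) \<Rightarrow> 'i hop) \<Rightarrow> ('i \<Rightarrow> complex) set \<Rightarrow> 'i hop \<Rightarrow> bool" where
  "even_ufm B X I gam \<pi> Dom D \<longleftrightarrow>
     star_rep B X (l2 I) \<pi> \<and>
     (\<forall>b\<in>B. \<forall>\<phi>\<in>l2 I. \<pi> b (grade gam \<phi>) = grade gam (\<pi> b \<phi>)) \<and>
     self_adjoint (l2 I) Dom D \<and>
     (\<forall>\<phi>\<in>Dom. grade gam \<phi> \<in> Dom \<and> D (grade gam \<phi>) = (\<lambda>i. - grade gam (D \<phi>) i)) \<and>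
     (\<forall>b\<in>B. cpt_op (l2 I) (\<lambda>\<phi>. \<pi> b (resolvent Dom D \<i> \<phi>)) \<and>
             cpt_op (l2 I) (\<lambda>\<phi>. \<pi> b (resolvent Dom D (- \<i>) \<phi>))) \<and>
     fdense_in (lip_alg B \<pi> Dom D) B X"

definition spectral_triple :: "(('x \<Rightarrow> complex) set) \<Rightarrow> 'x set \<Rightarrow> 'i set \<Rightarrow> ('i \<Rightarrow> bool) \<Rightarrow>
    (('x \<Rightarrow> complex) \<Rightarrow> 'i hop) \<Rightarrow> ('i \<Rightarrow> complex) set \<Rightarrow> 'i hop \<Rightarrow> bool" where
  "spectral_triple B X I gam \<pi> Dom D \<longleftrightarrow> even_ufm B X I gam \<pi> Dom D \<and>
     (\<forall>b\<in>B. (\<forall>\<phi>\<in>l2 I. \<pi> b \<phi> = (\<lambda>i. 0)) \<longrightarrow> (\<forall>x\<in>X. b x = 0))"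

definition p_summable :: "real \<Rightarrow> (('x \<Rightarrow> complex) set) \<Rightarrow> 'x set \<Rightarrow> 'i set \<Rightarrow>
    (('x \<Rightarrow> complex) \<Rightarrow> 'i hop) \<Rightarrow> ('i \<Rightarrow> complex) set \<Rightarrow> 'i hop \<Rightarrow> bool" where
  "p_summable p B X I \<pi> Dom D \<longleftrightarrow> (\<exists>S. S \<subseteq> lip_alg B \<pi> Dom D \<and> subalgebra S \<and> fdense_in S B X \<and>
     (\<forall>b\<in>S. schatten (l2 I) p (\<lambda>\<phi>. \<pi> b (resolvent Dom D \<i> \<phi>)) \<and>
             schatten (l2 I) p (\<lambda>\<phi>. \<pi> b (resolvent Dom D (- \<i>) \<phi>))))"

definition finitely_summable :: "(('x \<Rightarrow> complex) set) \<Rightarrow> 'x set \<Rightarrow> 'i set \<Rightarrow>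
    (('x \<Rightarrow> complex) \<Rightarrow> 'i hop) \<Rightarrow> ('i \<Rightarrow> complex) set \<Rightarrow> 'i hop \<Rightarrow> bool" where
  "finitely_summable B X I \<pi> Dom D \<longleftrightarrow> (\<exists>p>0. p_summable p B X I \<pi> Dom D)"

definition theta_summable :: "(('x \<Rightarrow> complex) set) \<Rightarrow> 'x set \<Rightarrow> 'i set \<Rightarrow>
    (('x \<Rightarrow> complex) \<Rightarrow> 'i hop) \<Rightarrow> ('i \<Rightarrow> complex) set \<Rightarrow> 'i hop \<Rightarrow> bool" where
  "theta_summable B X I \<pi> Dom D \<longleftrightarrow> (\<exists>S. S \<subseteq> lip_alg B \<pi> Dom D \<and> subalgebra S \<and> fdense_in S B X \<and>
     (\<forall>b\<in>S. Li_half (l2 I) (\<lambda>\<phi>. \<pi> b (resolvent Dom D \<i> \<phi>)) \<and>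
             Li_half (l2 I) (\<lambda>\<phi>. \<pi> b (resolvent Dom D (- \<i>) \<phi>))))"

text \<open>l^2(V_A, C^2) = l^2(V_A) \<oplus> l^2(V_A) is l^2(V_A \<times> UNIV) with index (\<mu>, True) for the
  + component and (\<mu>, False) for the - component; grading by snd.\<close>

definition BP_index :: "(nat \<Rightarrow> nat \<Rightarrow> bool) \<Rightarrow> nat \<Rightarrow> (nat list \<times> bool) set" where
  "BP_index A N = words A N \<times> UNIV"

definition pi_tau :: "(nat list \<Rightarrow> nat \<Rightarrow> nat) \<Rightarrow> (nat list \<Rightarrow> nat \<Rightarrow> nat) \<Rightarrow>
    ((nat \<Rightarrow> nat) \<Rightarrow> complex) \<Rightarrow> (nat list \<times> bool) hop" where
  "pi_tau tp tm f \<phi> = (\<lambda>(\<mu>, b). (if b then f (tp \<mu>) else f (tm \<mu>)) * \<phi> (\<mu>, b))"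

definition D_fin :: "(nat list \<Rightarrow> real) \<Rightarrow> (nat list \<times> bool) hop" where
  "D_fin w \<phi> = (\<lambda>(\<mu>, b). complex_of_real (w \<mu>) * \<phi> (\<mu>, \<not> b))"

definition fin_supp :: "(nat \<Rightarrow> nat \<Rightarrow> bool) \<Rightarrow> nat \<Rightarrow> (nat list \<times> bool \<Rightarrow> complex) set" where
  "fin_supp A N = {\<phi> \<in> l2 (BP_index A N). finite {i. \<phi> i \<noteq> 0}}"

definition D_dom :: "(nat \<Rightarrow> nat \<Rightarrow> bool) \<Rightarrow> nat \<Rightarrow> (nat list \<Rightarrow> real) \<Rightarrow> (nat list \<times> bool \<Rightarrow> complex) set" where
  "D_dom A N w = closure_dom (l2 (BP_index A N)) (fin_supp A N) (D_fin w)"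

definition D_op :: "(nat \<Rightarrow> nat \<Rightarrow> bool) \<Rightarrow> nat \<Rightarrow> (nat list \<Rightarrow> real) \<Rightarrow> (nat list \<times> bool) hop" where
  "D_op A N w = closure_op (l2 (BP_index A N)) (fin_supp A N) (D_fin w)"

definition w_s :: "real \<Rightarrow> nat list \<Rightarrow> real" where
  "w_s s \<mu> = real (length \<mu>) powr s"

definition w_exp :: "nat list \<Rightarrow> real" where
  "w_exp \<mu> = exp (real (length \<mu>))"

end

theory Submission
  imports Defs
begin

text \<open>On the fibre \<open>\<complex>\<^sup>2\<close> over a word \<open>\<mu>\<close> the Dirac operator acts by the matrix
  \<open>[[0, w \<mu>], [w \<mu>, 0]]\<close>, with \<open>w \<mu> = |\<mu>|\<^sup>s\<close> or \<open>e\<^bsup>|\<mu>|\<^esup>\<close>. Hence it is self-adjoint on its maximal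
  domain, and \<open>\<pi>\<^sub>\<tau>(b)(D \<plusminus> i)\<^sup>-\<^sup>1\<close> acts fibrewise by \<open>2 \<times> 2\<close> matrices whose entries are
  \<open>O(\<parallel>b\<parallel>\<^sub>\<infinity> / (1 + w \<mu>))\<close>. Since there are at most \<open>(N + 1)\<^sup>n\<close> words of length \<open>\<le> n\<close>, the singular
  values with index around \<open>2 (N + 1)\<^sup>n\<close> are \<open>O((n + 1)\<^sup>-\<^sup>s)\<close> resp. \<open>O(e\<^sup>-\<^sup>n)\<close>: this gives
  compactness, \<open>\<theta>\<close>-summability for \<open>s \<ge> 1/2\<close> and \<open>2 (N + 1)\<close>-summability for the exponential weight.
  The commutator \<open>[D, \<pi>\<^sub>\<tau>(b)]\<close> acts off-diagonally by \<open>w \<mu> (b(\<tau>\<^sub>+ \<mu>) - b(\<tau>\<^sub>- \<mu>))\<close>; for \<open>b\<close> locally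
  constant, comparability of \<open>\<tau>\<close> makes this vanish on all long words, so the dense subalgebra of
  locally constant functions is Lipschitz. Faithfulness under density follows by evaluating
  \<open>\<pi>\<^sub>\<tau>(b)\<close> on unit vectors.\<close>

section \<open>Square-summable families\<close>

abbreviation sq_norms :: "('i \<Rightarrow> complex) \<Rightarrow> 'i \<Rightarrow> real" where
  "sq_norms \<phi> \<equiv> (\<lambda>x. (cmod (\<phi> x))\<^sup>2)"

lemma mem_l2_iff: "\<phi> \<in> l2 I \<longleftrightarrow> (\<forall>x. x \<notin> I \<longrightarrow> \<phi> x = 0) \<and> sq_norms \<phi> summable_on UNIV"
  unfolding l2_def by simp

lemma l2_outside_zero: "\<phi> \<in> l2 I \<Longrightarrow> x \<notin> I \<Longrightarrow> \<phi> x = 0"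
  by (simp add: l2_def)

lemma l2_norm_nonneg [simp]: "0 \<le> l2_norm \<phi>"
  unfolding l2_norm_def by (simp add: infsum_nonneg)

lemma l2_norm_zero [simp]: "l2_norm (\<lambda>x. 0) = 0"
  unfolding l2_norm_def by simp

lemma l2_norm_squared: "(l2_norm \<phi>)\<^sup>2 = infsum (sq_norms \<phi>) UNIV"
  unfolding l2_norm_def by (simp add: infsum_nonneg)

lemma l2_by_finite_sums:
  assumes "\<And>F. finite F \<Longrightarrow> (\<Sum>x\<in>F. (cmod (\<phi> x))\<^sup>2) \<le> B\<^sup>2" "0 \<le> B"
  shows "sq_norms \<phi> summable_on UNIV" "l2_norm \<phi> \<le> B"
proof -
  show s: "sq_norms \<phi> summable_on UNIV"
    by (rule nonneg_bdd_above_summable_on) (use assms in \<open>auto intro!: bdd_aboveI\<close>)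
  have "infsum (sq_norms \<phi>) UNIV \<le> B\<^sup>2"
    by (rule infsum_le_finite_sums[OF s]) (use assms in auto)
  then show "l2_norm \<phi> \<le> B"
    using assms(2) real_le_lsqrt unfolding l2_norm_def by (simp add: infsum_nonneg)
qed

lemma finite_sum_le_l2_norm_sq:
  assumes "sq_norms \<phi> summable_on UNIV" "finite F"
  shows "(\<Sum>x\<in>F. (cmod (\<phi> x))\<^sup>2) \<le> (l2_norm \<phi>)\<^sup>2"
proof -
  have "infsum (sq_norms \<phi>) F \<le> infsum (sq_norms \<phi>) UNIV"
    by (rule infsum_mono_neutral) (use assms in auto)
  then show ?thesis using assms(2) by (simp add: l2_norm_squared)
qed

lemma norm_le_l2_norm:
  assumes "sq_norms \<phi> summable_on UNIV"
  shows "cmod (\<phi> x) \<le> l2_norm \<phi>"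
proof -
  have "(cmod (\<phi> x))\<^sup>2 \<le> (l2_norm \<phi>)\<^sup>2"
    using finite_sum_le_l2_norm_sq[OF assms, of "{x}"] by simp
  then show ?thesis using l2_norm_nonneg power2_le_imp_le by blast
qed

lemma L2_set_le_l2_norm:
  assumes "sq_norms \<phi> summable_on UNIV" "finite F"
  shows "L2_set (\<lambda>x. cmod (\<phi> x)) F \<le> l2_norm \<phi>"
  using finite_sum_le_l2_norm_sq[OF assms] real_sqrt_le_mono unfolding L2_set_def
  by fastforce

lemma l2_norm_add_le:
  assumes "sq_norms \<phi> summable_on UNIV" "sq_norms \<psi> summable_on UNIV"
  shows "sq_norms (\<lambda>x. \<phi> x + \<psi> x) summable_on UNIV \<and> l2_norm (\<lambda>x. \<phi> x + \<psi> x) \<le> l2_norm \<phi> + l2_norm \<psi>"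
proof -
  have "(\<Sum>x\<in>F. (cmod (\<phi> x + \<psi> x))\<^sup>2) \<le> (l2_norm \<phi> + l2_norm \<psi>)\<^sup>2" if "finite F" for F
  proof -
    have "L2_set (\<lambda>x. cmod (\<phi> x + \<psi> x)) F \<le> L2_set (\<lambda>x. cmod (\<phi> x) + cmod (\<psi> x)) F"
      by (rule L2_set_mono) (auto simp: norm_triangle_ineq)
    also have "\<dots> \<le> L2_set (\<lambda>x. cmod (\<phi> x)) F + L2_set (\<lambda>x. cmod (\<psi> x)) F"
      by (rule L2_set_triangle_ineq)
    also have "\<dots> \<le> l2_norm \<phi> + l2_norm \<psi>"
      using L2_set_le_l2_norm[OF assms(1) that] L2_set_le_l2_norm[OF assms(2) that] by simp
    finally have "(L2_set (\<lambda>x. cmod (\<phi> x + \<psi> x)) F)\<^sup>2 \<le> (l2_norm \<phi> + l2_norm \<psi>)\<^sup>2"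
      by (simp add: power_mono)
    then show ?thesis by (simp add: L2_set_def sum_nonneg)
  qed
  then show ?thesis using l2_by_finite_sums[of "\<lambda>x. \<phi> x + \<psi> x"] l2_norm_nonneg
    by (meson add_nonneg_nonneg)
qed

lemma l2_norm_scale_le:
  assumes "sq_norms \<phi> summable_on UNIV"
  shows "sq_norms (\<lambda>x. a * \<phi> x) summable_on UNIV \<and> l2_norm (\<lambda>x. a * \<phi> x) \<le> cmod a * l2_norm \<phi>"
proof -
  have "(\<Sum>x\<in>F. (cmod (a * \<phi> x))\<^sup>2) \<le> (cmod a * l2_norm \<phi>)\<^sup>2" if "finite F" for F
  proof -
    have "(\<Sum>x\<in>F. (cmod (a * \<phi> x))\<^sup>2) = (cmod a)\<^sup>2 * (\<Sum>x\<in>F. (cmod (\<phi> x))\<^sup>2)"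
      by (simp add: norm_mult power_mult_distrib sum_distrib_left)
    also have "\<dots> \<le> (cmod a)\<^sup>2 * (l2_norm \<phi>)\<^sup>2"
      using finite_sum_le_l2_norm_sq[OF assms that] by (simp add: mult_left_mono)
    finally show ?thesis by (simp add: power_mult_distrib)
  qed
  then show ?thesis using l2_by_finite_sums[of "\<lambda>x. a * \<phi> x"] l2_norm_nonneg
    by (meson mult_nonneg_nonneg norm_ge_zero)
qed

lemma l2_norm_diff_le:
  assumes "sq_norms \<phi> summable_on UNIV" "sq_norms \<psi> summable_on UNIV"
  shows "sq_norms (\<lambda>x. \<phi> x - \<psi> x) summable_on UNIV \<and> l2_norm (\<lambda>x. \<phi> x - \<psi> x) \<le> l2_norm \<phi> + l2_norm \<psi>"
  using l2_norm_add_le[OF assms(1) l2_norm_scale_le[OF assms(2), of "-1", THEN conjunct1]]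
    l2_norm_scale_le[OF assms(2), of "-1"] by simp

lemma l2_lincomb: "\<phi> \<in> l2 I \<Longrightarrow> \<psi> \<in> l2 I \<Longrightarrow> (\<lambda>x. a * \<phi> x + \<psi> x) \<in> l2 I"
  using l2_norm_add_le[of "\<lambda>x. a * \<phi> x" \<psi>] l2_norm_scale_le[of \<phi> a] unfolding mem_l2_iff by auto

lemma l2_diff: "\<phi> \<in> l2 I \<Longrightarrow> \<psi> \<in> l2 I \<Longrightarrow> (\<lambda>x. \<phi> x - \<psi> x) \<in> l2 I"
  using l2_norm_diff_le[of \<phi> \<psi>] unfolding mem_l2_iff by auto

lemma l2_zero: "(\<lambda>x. 0) \<in> l2 I"
  unfolding mem_l2_iff by simp

lemma l2_uminus: "\<phi> \<in> l2 I \<Longrightarrow> (\<lambda>x. - \<phi> x) \<in> l2 I"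
  using l2_lincomb[of \<phi> I "\<lambda>x. 0" "-1"] l2_zero[of I] by simp

lemma summable_sq_norms_finite_support:
  assumes "finite {x. \<phi> x \<noteq> 0}"
  shows "sq_norms \<phi> summable_on UNIV"
proof -
  have "sq_norms \<phi> summable_on {x. \<phi> x \<noteq> 0}" using assms by simp
  then show ?thesis by (rule summable_on_cong_neutral[THEN iffD1, rotated -1]) auto
qed

lemma l2_finite_support: "finite {x. \<phi> x \<noteq> 0} \<Longrightarrow> \<forall>x. x \<notin> I \<longrightarrow> \<phi> x = 0 \<Longrightarrow> \<phi> \<in> l2 I"
  by (simp add: mem_l2_iff summable_sq_norms_finite_support)

lemma l2_conv_pointwise:
  assumes "\<forall>n. f n \<in> l2 I" "\<phi> \<in> l2 I" "l2_conv f \<phi>"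
  shows "(\<lambda>n. f n x) \<longlonglongrightarrow> \<phi> x"
proof -
  have a: "\<forall>n. norm (f n x - \<phi> x) \<le> l2_norm (\<lambda>y. f n y - \<phi> y)"
  proof
    fix n
    have "(\<lambda>y. f n y - \<phi> y) \<in> l2 I" using assms(1,2) by (intro l2_diff) auto
    then show "norm (f n x - \<phi> x) \<le> l2_norm (\<lambda>y. f n y - \<phi> y)"
      unfolding mem_l2_iff using norm_le_l2_norm[of "\<lambda>y. f n y - \<phi> y" x] by blast
  qed
  have b: "(\<lambda>n. l2_norm (\<lambda>y. f n y - \<phi> y)) \<longlonglongrightarrow> 0"
    using assms(3) by (simp add: l2_conv_def)
  have "(\<lambda>n. f n x - \<phi> x) \<longlonglongrightarrow> 0"
    by (rule Lim_null_comparison[OF always_eventually[OF a] b])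
  then show ?thesis by (simp add: LIM_zero_iff)
qed

lemma infsum_singleton_support:
  assumes "\<And>y. y \<noteq> p \<Longrightarrow> f y = (0::complex)"
  shows "infsum f UNIV = f p"
proof -
  have "infsum f UNIV = infsum f {p}"
    by (rule infsum_cong_neutral) (use assms in auto)
  then show ?thesis by simp
qed

definition trunc :: "('i \<Rightarrow> nat) \<Rightarrow> nat \<Rightarrow> ('i \<Rightarrow> complex) \<Rightarrow> 'i \<Rightarrow> complex" where
  "trunc g n \<phi> = (\<lambda>x. if g x \<le> n then \<phi> x else 0)"

lemma trunc_tail_small:
  assumes s: "sq_norms \<phi> summable_on UNIV" and e: "e > 0"
  shows "\<exists>n0. \<forall>n\<ge>n0. l2_norm (\<lambda>x. trunc g n \<phi> x - \<phi> x) \<le> e"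
proof -
  obtain G where G: "finite G" "dist (sum (sq_norms \<phi>) G) (infsum (sq_norms \<phi>) UNIV) \<le> e\<^sup>2"
    using has_sum_finite_approximation[OF has_sum_infsum[OF s], of "e\<^sup>2"] e by auto
  have "l2_norm (\<lambda>x. trunc g n \<phi> x - \<phi> x) \<le> e" if "n \<ge> Max (g ` G)" for n
  proof (rule l2_by_finite_sums(2))
    fix F :: "'a set" assume F: "finite F"
    let ?F = "{x\<in>F. n < g x}"
    have "g x \<le> n" if "x \<in> G" for x
      using Max_ge[of "g ` G" "g x"] G(1) that \<open>n \<ge> Max (g ` G)\<close> by (meson finite_imageI image_eqI le_trans)
    then have disj: "?F \<inter> G = {}" by force
    have "(\<Sum>x\<in>F. (cmod (trunc g n \<phi> x - \<phi> x))\<^sup>2) = (\<Sum>x\<in>?F. (cmod (\<phi> x))\<^sup>2)"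
      using F by (intro sum.mono_neutral_cong_right) (auto simp: trunc_def)
    also have "\<dots> = (\<Sum>x\<in>?F \<union> G. (cmod (\<phi> x))\<^sup>2) - (\<Sum>x\<in>G. (cmod (\<phi> x))\<^sup>2)"
      using disj F G(1) by (simp add: sum.union_disjoint)
    also have "\<dots> \<le> infsum (sq_norms \<phi>) UNIV - (\<Sum>x\<in>G. (cmod (\<phi> x))\<^sup>2)"
      using finite_sum_le_l2_norm_sq[OF s, of "?F \<union> G"] F G(1) by (simp add: l2_norm_squared)
    also have "\<dots> \<le> e\<^sup>2" using G(2) by (simp add: dist_real_def)
    finally show "(\<Sum>x\<in>F. (cmod (trunc g n \<phi> x - \<phi> x))\<^sup>2) \<le> e\<^sup>2" .
  qed (use e in simp)
  then show ?thesis by blast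
qed

lemma l2_conv_trunc:
  assumes "sq_norms \<phi> summable_on UNIV"
  shows "l2_conv (\<lambda>n. trunc g n \<phi>) \<phi>"
  unfolding l2_conv_def
proof (rule LIMSEQ_I)
  fix r :: real assume r: "0 < r"
  then obtain n0 where "\<forall>n\<ge>n0. l2_norm (\<lambda>x. trunc g n \<phi> x - \<phi> x) \<le> r/2"
    using trunc_tail_small[OF assms, of "r/2" g] by auto
  then show "\<exists>no. \<forall>n\<ge>no. norm (l2_norm (\<lambda>x. trunc g n \<phi> x - \<phi> x) - 0) < r"
    using r by (intro exI[of _ n0]) (auto intro: order.strict_trans1[of _ "r/2"])
qed

lemma product_seq_compact:
  fixes f :: "nat \<Rightarrow> 'i::countable \<Rightarrow> 'a::first_countable_topology"
  assumes "\<And>n i. f n i \<in> K i" "\<And>i. compact (K i)"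
  shows "\<exists>r g. strict_mono r \<and> (\<forall>i. g i \<in> K i) \<and> (\<forall>i. (\<lambda>n. f (r n) i) \<longlonglongrightarrow> g i)"
proof -
  have "compactin (product_topology (\<lambda>i. euclidean) UNIV) (PiE UNIV K)"
    by (rule compactin_PiE[THEN iffD2]) (use assms(2) in simp)
  hence "compact (PiE UNIV K)"
    by (simp only: euclidean_product_topology compactin_euclidean_iff)
  then have "seq_compact (PiE UNIV K)" by (rule compact_imp_seq_compact)
  moreover have "\<forall>n. f n \<in> PiE UNIV K" using assms(1) by (simp add: PiE_UNIV_domain)
  ultimately obtain g r where g: "g \<in> PiE UNIV K" "strict_mono r" "(f \<circ> r) \<longlonglongrightarrow> g"
    unfolding seq_compact_def by meson
  have "(\<lambda>n. f (r n) i) \<longlonglongrightarrow> g i" for i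
    using continuous_on_tendsto_compose[OF continuous_on_product_coordinates g(3)] by (simp add: o_def)
  then show ?thesis using g by (auto simp: PiE_UNIV_domain Pi_iff)
qed

lemma l2_bounded_pointwise_subseq:
  fixes f :: "nat \<Rightarrow> 'i::countable \<Rightarrow> complex"
  assumes f: "\<forall>n. f n \<in> l2 I" and B: "\<forall>n. l2_norm (f n) \<le> B"
  shows "\<exists>r g. strict_mono r \<and> g \<in> l2 I \<and> l2_norm g \<le> B \<and> (\<forall>x. (\<lambda>n. f (r n) x) \<longlonglongrightarrow> g x)"
proof -
  have B0: "0 \<le> B" using B l2_norm_nonneg order_trans by blast
  have fs: "sq_norms (f n) summable_on UNIV" for n using f by (simp add: mem_l2_iff)
  have "f n x \<in> cball 0 B" for n x using norm_le_l2_norm[OF fs, of n x] B by (simp add: order_trans)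
  then obtain r g where r: "strict_mono r" and conv: "\<forall>x. (\<lambda>n. f (r n) x) \<longlonglongrightarrow> g x"
    using product_seq_compact[of f "\<lambda>_. cball 0 B"] by auto
  have g_out: "g x = 0" if "x \<notin> I" for x
  proof -
    have "(\<lambda>n. f (r n) x) = (\<lambda>n. 0)" using f that by (auto simp: mem_l2_iff)
    then show ?thesis using conv LIMSEQ_unique[OF _ tendsto_const] by metis
  qed
  have g_sums: "(\<Sum>x\<in>F. (cmod (g x))\<^sup>2) \<le> B\<^sup>2" if "finite F" for F
  proof -
    have "(\<lambda>n. \<Sum>x\<in>F. (cmod (f (r n) x))\<^sup>2) \<longlonglongrightarrow> (\<Sum>x\<in>F. (cmod (g x))\<^sup>2)"
      using conv by (intro tendsto_intros) auto
    moreover have "(\<Sum>x\<in>F. (cmod (f (r n) x))\<^sup>2) \<le> B\<^sup>2" for n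
      using finite_sum_le_l2_norm_sq[OF fs that, of "r n"] B l2_norm_nonneg
      by (meson order_trans power_mono)
    ultimately show ?thesis by (intro LIMSEQ_le_const2) auto
  qed
  have "g \<in> l2 I" using l2_by_finite_sums(1)[OF g_sums B0] g_out by (auto simp: mem_l2_iff)
  then show ?thesis using r conv l2_by_finite_sums(2)[OF g_sums B0] by blast
qed

section \<open>Operator norms and singular values\<close>

lemma hop_norm_le:
  assumes "\<forall>\<phi>\<in>H. l2_norm (T \<phi>) \<le> c * l2_norm \<phi>" "0 \<le> c" "(\<lambda>x. 0) \<in> H"
  shows "hop_norm H T \<le> c"
  unfolding hop_norm_def
proof (rule cSup_least)
  have "l2_norm (T (\<lambda>x. 0)) \<in> {l2_norm (T \<phi>) |\<phi>. \<phi> \<in> H \<and> l2_norm \<phi> \<le> 1}"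
    using assms(3) by (intro CollectI exI[of _ "\<lambda>x. 0"]) (simp add: l2_norm_zero)
  then show "{l2_norm (T \<phi>) |\<phi>. \<phi> \<in> H \<and> l2_norm \<phi> \<le> 1} \<noteq> {}" by blast
  fix y assume "y \<in> {l2_norm (T \<phi>) |\<phi>. \<phi> \<in> H \<and> l2_norm \<phi> \<le> 1}"
  then obtain \<phi> where "\<phi> \<in> H" "l2_norm \<phi> \<le> 1" "y = l2_norm (T \<phi>)" by blast
  then show "y \<le> c" using assms(1,2) by (metis mult_left_le order_trans)
qed

lemma hop_norm_nonneg:
  assumes "\<forall>\<phi>\<in>H. l2_norm (T \<phi>) \<le> K * l2_norm \<phi>" "(\<lambda>x. 0) \<in> H"
  shows "0 \<le> hop_norm H T"
  unfolding hop_norm_def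
proof (rule cSup_upper2)
  show "l2_norm (T (\<lambda>x. 0)) \<in> {l2_norm (T \<phi>) |\<phi>. \<phi> \<in> H \<and> l2_norm \<phi> \<le> 1}"
    using assms(2) by (intro CollectI exI[of _ "\<lambda>x. 0"]) (simp add: l2_norm_zero)
  show "0 \<le> l2_norm (T (\<lambda>x. 0))" by simp
  show "bdd_above {l2_norm (T \<phi>) |\<phi>. \<phi> \<in> H \<and> l2_norm \<phi> \<le> 1}"
  proof (rule bdd_aboveI)
    fix y assume "y \<in> {l2_norm (T \<phi>) |\<phi>. \<phi> \<in> H \<and> l2_norm \<phi> \<le> 1}"
    then obtain \<phi> where p: "\<phi> \<in> H" "l2_norm \<phi> \<le> 1" "y = l2_norm (T \<phi>)" by blast
    have "y \<le> K * l2_norm \<phi>" using assms(1) p by auto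
    also have "\<dots> \<le> \<bar>K\<bar> * l2_norm \<phi>" by (intro mult_right_mono) auto
    also have "\<dots> \<le> \<bar>K\<bar>" using p(2) by (simp add: mult_left_le)
    finally show "y \<le> \<bar>K\<bar>" .
  qed
qed

lemma bdd_op_diff_bound:
  assumes "bdd_op (l2 I) T" "bdd_op (l2 I) F"
  shows "\<exists>K. \<forall>\<phi>\<in>l2 I. l2_norm (\<lambda>x. T \<phi> x - F \<phi> x) \<le> K * l2_norm \<phi>"
proof -
  obtain K1 where K1: "\<forall>\<phi>\<in>l2 I. l2_norm (T \<phi>) \<le> K1 * l2_norm \<phi>"
    using assms(1) unfolding bdd_op_def by blast
  obtain K2 where K2: "\<forall>\<phi>\<in>l2 I. l2_norm (F \<phi>) \<le> K2 * l2_norm \<phi>"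
    using assms(2) unfolding bdd_op_def by blast
  have "l2_norm (\<lambda>x. T \<phi> x - F \<phi> x) \<le> (K1 + K2) * l2_norm \<phi>" if "\<phi> \<in> l2 I" for \<phi>
  proof -
    have "T \<phi> \<in> l2 I" "F \<phi> \<in> l2 I" using assms that unfolding bdd_op_def by auto
    then have "l2_norm (\<lambda>x. T \<phi> x - F \<phi> x) \<le> l2_norm (T \<phi>) + l2_norm (F \<phi>)"
      using l2_norm_diff_le unfolding mem_l2_iff by blast
    also have "\<dots> \<le> K1 * l2_norm \<phi> + K2 * l2_norm \<phi>" using K1 K2 that by (intro add_mono) auto
    finally show ?thesis by (simp add: algebra_simps)
  qed
  then show ?thesis by blast
qed

lemma rank_le_op_zero: "rank_le_op (l2 I) k (\<lambda>\<phi> x. 0)"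
  unfolding rank_le_op_def bdd_op_def
  by (intro conjI exI[of _ "[]"] exI[of _ 0]) (auto simp: l2_zero)

lemma hop_norm_diff_rank_nonneg:
  assumes "bdd_op (l2 I) T" "rank_le_op (l2 I) k F"
  shows "0 \<le> hop_norm (l2 I) (\<lambda>\<phi> x. T \<phi> x - F \<phi> x)"
proof -
  obtain K where "\<forall>\<phi>\<in>l2 I. l2_norm (\<lambda>x. T \<phi> x - F \<phi> x) \<le> K * l2_norm \<phi>"
    using bdd_op_diff_bound[OF assms(1)] assms(2) unfolding rank_le_op_def by blast
  then show ?thesis by (intro hop_norm_nonneg[of _ _ K]) (auto simp: l2_zero)
qed

lemma sing_val_nonneg:
  assumes "bdd_op (l2 I) T"
  shows "0 \<le> sing_val (l2 I) T k"
  unfolding sing_val_def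
proof (rule cInf_greatest)
  show "{hop_norm (l2 I) (\<lambda>\<phi> x. T \<phi> x - F \<phi> x) |F. rank_le_op (l2 I) k F} \<noteq> {}"
    using rank_le_op_zero by blast
  fix y assume "y \<in> {hop_norm (l2 I) (\<lambda>\<phi> x. T \<phi> x - F \<phi> x) |F. rank_le_op (l2 I) k F}"
  then show "0 \<le> y" using hop_norm_diff_rank_nonneg[OF assms] by blast
qed

lemma sing_val_le_hop_norm:
  assumes "bdd_op (l2 I) T" "rank_le_op (l2 I) k F"
  shows "sing_val (l2 I) T k \<le> hop_norm (l2 I) (\<lambda>\<phi> x. T \<phi> x - F \<phi> x)"
  unfolding sing_val_def
proof (rule cInf_lower)
  show "hop_norm (l2 I) (\<lambda>\<phi> x. T \<phi> x - F \<phi> x) \<in> {hop_norm (l2 I) (\<lambda>\<phi> x. T \<phi> x - F \<phi> x) |F. rank_le_op (l2 I) k F}"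
    using assms(2) by blast
  show "bdd_below {hop_norm (l2 I) (\<lambda>\<phi> x. T \<phi> x - F \<phi> x) |F. rank_le_op (l2 I) k F}"
    using hop_norm_diff_rank_nonneg[OF assms(1)] by (intro bdd_belowI[of _ 0]) blast
qed

lemma sum_nth_indicator:
  "distinct js \<Longrightarrow>
    (\<Sum>j<length js. c (js!j) * (if x = js!j then 1 else 0)) = (if x \<in> set js then c x else (0::complex))"
proof (induction js)
  case (Cons a js)
  have "(\<Sum>j<length (a # js). c ((a#js)!j) * (if x = (a#js)!j then 1 else 0))
      = c a * (if x = a then 1 else 0) + (\<Sum>j<length js. c (js!j) * (if x = js!j then 1 else 0))"
    by (simp only: length_Cons sum.lessThan_Suc_shift nth_Cons_0 nth_Cons_Suc)
  then show ?case using Cons by auto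
qed simp

lemma rank_le_op_finite_support:
  assumes "bdd_op (l2 I) F" "finite J" "J \<subseteq> I" "card J \<le> k"
    "\<forall>\<phi>\<in>l2 I. \<forall>x. x \<notin> J \<longrightarrow> F \<phi> x = 0"
  shows "rank_le_op (l2 I) k F"
proof -
  obtain js where js: "set js = J" "distinct js" using finite_distinct_list[OF assms(2)] by blast
  define vs where "vs = map (\<lambda>j x. if x = j then 1 else (0::complex)) js"
  have len: "length vs \<le> k" using js assms(4) distinct_card[OF js(2)] by (simp add: vs_def)
  have "set vs \<subseteq> l2 I"
    using js assms(3) by (auto simp: vs_def intro!: l2_finite_support)
  moreover have "\<exists>c. F \<phi> = (\<lambda>x. \<Sum>j<length vs. c j * (vs ! j) x)" if "\<phi> \<in> l2 I" for \<phi>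
  proof (intro exI[of _ "\<lambda>j. F \<phi> (js!j)"] ext)
    fix x
    show "F \<phi> x = (\<Sum>j<length vs. F \<phi> (js!j) * (vs ! j) x)"
      using sum_nth_indicator[OF js(2), of "F \<phi>" x] assms(5) that js(1) by (auto simp: vs_def)
  qed
  ultimately show ?thesis unfolding rank_le_op_def using assms(1) len by blast
qed

lemma bdd_op_cong:
  assumes "\<And>\<phi>. \<phi> \<in> l2 I \<Longrightarrow> T \<phi> = T' \<phi>"
  shows "bdd_op (l2 I) T = bdd_op (l2 I) T'"
proof -
  have "(\<forall>\<phi>\<in>l2 I. \<forall>\<psi>\<in>l2 I. \<forall>a. T (\<lambda>x. a * \<phi> x + \<psi> x) = (\<lambda>x. a * T \<phi> x + T \<psi> x)) =
        (\<forall>\<phi>\<in>l2 I. \<forall>\<psi>\<in>l2 I. \<forall>a. T' (\<lambda>x. a * \<phi> x + \<psi> x) = (\<lambda>x. a * T' \<phi> x + T' \<psi> x))"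
    using assms by (auto simp: l2_lincomb)
  then show ?thesis unfolding bdd_op_def using assms by auto
qed

lemma cpt_op_cong:
  assumes "\<And>\<phi>. \<phi> \<in> l2 I \<Longrightarrow> T \<phi> = T' \<phi>"
  shows "cpt_op (l2 I) T = cpt_op (l2 I) T'"
proof -
  have "((\<forall>n. f n \<in> l2 I) \<and> bounded (range (\<lambda>n. l2_norm (f n))) \<longrightarrow>
        (\<exists>r \<psi>. strict_mono r \<and> \<psi> \<in> l2 I \<and> l2_conv (\<lambda>n. T (f (r n))) \<psi>)) =
        ((\<forall>n. f n \<in> l2 I) \<and> bounded (range (\<lambda>n. l2_norm (f n))) \<longrightarrow>
        (\<exists>r \<psi>. strict_mono r \<and> \<psi> \<in> l2 I \<and> l2_conv (\<lambda>n. T' (f (r n))) \<psi>))" for f :: "nat \<Rightarrow> _"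
  proof (cases "\<forall>n. f n \<in> l2 I")
    case True
    have "(\<lambda>n. T (f (r n))) = (\<lambda>n. T' (f (r n)))" for r :: "nat \<Rightarrow> nat"
      using True assms by auto
    then show ?thesis by simp
  next
    case False
    then show ?thesis by blast
  qed
  then show ?thesis unfolding cpt_op_def by (simp only: bdd_op_cong[OF assms])
qed

lemma hop_norm_cong:
  assumes "\<And>\<phi>. \<phi> \<in> H \<Longrightarrow> T \<phi> = T' \<phi>"
  shows "hop_norm H T = hop_norm H T'"
proof -
  have "{l2_norm (T \<phi>) |\<phi>. \<phi> \<in> H \<and> l2_norm \<phi> \<le> 1} = {l2_norm (T' \<phi>) |\<phi>. \<phi> \<in> H \<and> l2_norm \<phi> \<le> 1}"
  proof (rule set_eqI)
    fix y
    have "\<forall>\<phi>. (y = l2_norm (T \<phi>) \<and> \<phi> \<in> H \<and> l2_norm \<phi> \<le> 1) \<longleftrightarrow> (y = l2_norm (T' \<phi>) \<and> \<phi> \<in> H \<and> l2_norm \<phi> \<le> 1)"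
      using assms by auto
    then show "y \<in> {l2_norm (T \<phi>) |\<phi>. \<phi> \<in> H \<and> l2_norm \<phi> \<le> 1} \<longleftrightarrow> y \<in> {l2_norm (T' \<phi>) |\<phi>. \<phi> \<in> H \<and> l2_norm \<phi> \<le> 1}"
      by simp
  qed
  then show ?thesis by (simp add: hop_norm_def)
qed

lemma sing_val_cong:
  assumes "\<And>\<phi>. \<phi> \<in> H \<Longrightarrow> T \<phi> = T' \<phi>"
  shows "sing_val H T k = sing_val H T' k"
proof -
  have "hop_norm H (\<lambda>\<phi> x. T \<phi> x - F \<phi> x) = hop_norm H (\<lambda>\<phi> x. T' \<phi> x - F \<phi> x)" for F
    by (rule hop_norm_cong) (simp add: assms)
  then show ?thesis unfolding sing_val_def by simp
qed

section \<open>Block operators on \<open>X \<times> {+, -}\<close>\<close>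

definition flip_comp :: "'a \<times> bool \<Rightarrow> 'a \<times> bool" where "flip_comp x = (fst x, \<not> snd x)"

lemma flip_comp_flip_comp[simp]: "flip_comp (flip_comp x) = x" by (simp add: flip_comp_def)
lemma fst_flip_comp[simp]: "fst (flip_comp x) = fst x" by (simp add: flip_comp_def)
lemma inj_on_flip_comp: "inj_on flip_comp A" by (metis flip_comp_flip_comp inj_on_inverseI)

text \<open>\<open>block_op \<alpha> \<beta>\<close> acts on the fibre \<open>\<complex>\<^sup>2\<close> over \<open>a\<close> by the matrix with diagonal
  entries \<open>\<alpha>(a, \<plusminus>)\<close> and off-diagonal entries \<open>\<beta>(a, \<plusminus>)\<close>; the Dirac operators, the
  representation and the resolvents are all of this form.\<close>

definition block_op :: "('a \<times> bool \<Rightarrow> complex) \<Rightarrow> ('a \<times> bool \<Rightarrow> complex) \<Rightarrow> ('a \<times> bool) hop" where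
  "block_op \<alpha> \<beta> \<phi> = (\<lambda>x. \<alpha> x * \<phi> x + \<beta> x * \<phi> (flip_comp x))"

lemma sq_sum_le_twice_sum_sq: "(a + b)\<^sup>2 \<le> 2 * a\<^sup>2 + 2 * (b::real)\<^sup>2"
proof -
  have "0 \<le> (a - b)\<^sup>2" by simp
  then show ?thesis by (simp add: power2_eq_square algebra_simps)
qed

lemma norm_block_op_le:
  assumes "cmod (\<alpha> x) \<le> K" "cmod (\<beta> x) \<le> K"
  shows "cmod (block_op \<alpha> \<beta> \<phi> x) \<le> K * cmod (\<phi> x) + K * cmod (\<phi> (flip_comp x))"
proof -
  have "cmod (block_op \<alpha> \<beta> \<phi> x) \<le> cmod (\<alpha> x) * cmod (\<phi> x) + cmod (\<beta> x) * cmod (\<phi> (flip_comp x))"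
    using norm_triangle_ineq[of "\<alpha> x * \<phi> x" "\<beta> x * \<phi> (flip_comp x)"] by (simp add: block_op_def norm_mult)
  also have "\<dots> \<le> K * cmod (\<phi> x) + K * cmod (\<phi> (flip_comp x))"
    using assms by (intro add_mono mult_right_mono) auto
  finally show ?thesis .
qed

lemma block_op_finite_sum_le:
  assumes s: "sq_norms \<phi> summable_on UNIV" and F: "finite F" and K: "0 \<le> K"
    and b: "\<forall>x\<in>F. cmod (\<alpha> x) \<le> K \<and> cmod (\<beta> x) \<le> K"
  shows "(\<Sum>x\<in>F. (cmod (block_op \<alpha> \<beta> \<phi> x))\<^sup>2) \<le> (2*K*l2_norm \<phi>)\<^sup>2"
proof -
  have pt: "(cmod (block_op \<alpha> \<beta> \<phi> x))\<^sup>2 \<le> 2*K\<^sup>2 * ((cmod (\<phi> x))\<^sup>2 + (cmod (\<phi> (flip_comp x)))\<^sup>2)" if "x \<in> F" for x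
  proof -
    have "(cmod (block_op \<alpha> \<beta> \<phi> x))\<^sup>2 \<le> (K * cmod (\<phi> x) + K * cmod (\<phi> (flip_comp x)))\<^sup>2"
      using norm_block_op_le[of \<alpha> x K \<beta> \<phi>] b that by (simp add: power_mono)
    also have "\<dots> \<le> 2 * (K * cmod (\<phi> x))\<^sup>2 + 2 * (K * cmod (\<phi> (flip_comp x)))\<^sup>2" by (rule sq_sum_le_twice_sum_sq)
    finally show ?thesis by (simp add: power_mult_distrib algebra_simps)
  qed
  have "(\<Sum>x\<in>F. (cmod (block_op \<alpha> \<beta> \<phi> x))\<^sup>2) \<le> (\<Sum>x\<in>F. 2*K\<^sup>2 * ((cmod (\<phi> x))\<^sup>2 + (cmod (\<phi> (flip_comp x)))\<^sup>2))"
    using pt by (rule sum_mono)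
  also have "\<dots> = 2*K\<^sup>2 * ((\<Sum>x\<in>F. (cmod (\<phi> x))\<^sup>2) + (\<Sum>x\<in>F. (cmod (\<phi> (flip_comp x)))\<^sup>2))"
    by (simp only: sum.distrib[symmetric] sum_distrib_left)
  also have "(\<Sum>x\<in>F. (cmod (\<phi> (flip_comp x)))\<^sup>2) = (\<Sum>x\<in>flip_comp ` F. (cmod (\<phi> x))\<^sup>2)"
    by (simp add: sum.reindex inj_on_flip_comp)
  also have "2*K\<^sup>2 * ((\<Sum>x\<in>F. (cmod (\<phi> x))\<^sup>2) + (\<Sum>x\<in>flip_comp ` F. (cmod (\<phi> x))\<^sup>2))
      \<le> 2*K\<^sup>2 * ((l2_norm \<phi>)\<^sup>2 + (l2_norm \<phi>)\<^sup>2)"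
    using finite_sum_le_l2_norm_sq[OF s F] finite_sum_le_l2_norm_sq[OF s finite_imageI[OF F, of flip_comp]]
    by (intro mult_left_mono add_mono) auto
  also have "\<dots> = (2*K*l2_norm \<phi>)\<^sup>2" by (simp add: power_mult_distrib)
  finally show ?thesis .
qed

lemma block_op_outside_zero: "\<phi> \<in> l2 (X \<times> UNIV) \<Longrightarrow> x \<notin> X \<times> UNIV \<Longrightarrow> block_op \<alpha> \<beta> \<phi> x = 0"
  unfolding block_op_def l2_def flip_comp_def by (cases x) auto

lemma block_op_l2:
  assumes \<phi>: "\<phi> \<in> l2 (X \<times> UNIV)" and K: "0 \<le> K"
    and b: "\<forall>x\<in>X \<times> UNIV. cmod (\<alpha> x) \<le> K \<and> cmod (\<beta> x) \<le> K"
  shows "block_op \<alpha> \<beta> \<phi> \<in> l2 (X \<times> UNIV) \<and> l2_norm (block_op \<alpha> \<beta> \<phi>) \<le> 2*K*l2_norm \<phi>"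
proof -
  have s: "sq_norms \<phi> summable_on UNIV" using \<phi> by (simp add: mem_l2_iff)
  have fs: "(\<Sum>x\<in>F. (cmod (block_op \<alpha> \<beta> \<phi> x))\<^sup>2) \<le> (2*K*l2_norm \<phi>)\<^sup>2" if F: "finite F" for F
  proof -
    have "(\<Sum>x\<in>F. (cmod (block_op \<alpha> \<beta> \<phi> x))\<^sup>2) = (\<Sum>x\<in>F \<inter> (X \<times> UNIV). (cmod (block_op \<alpha> \<beta> \<phi> x))\<^sup>2)"
      using F block_op_outside_zero[OF \<phi>] by (intro sum.mono_neutral_right) auto
    also have "\<dots> \<le> (2*K*l2_norm \<phi>)\<^sup>2"
      using F b by (intro block_op_finite_sum_le[OF s _ K]) auto
    finally show ?thesis .
  qed
  have "0 \<le> 2*K*l2_norm \<phi>" using mult_nonneg_nonneg[OF K l2_norm_nonneg, of \<phi>] by simp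
  then show ?thesis using l2_by_finite_sums[OF fs] block_op_outside_zero[OF \<phi>] by (auto simp: mem_l2_iff)
qed

lemma block_op_lincomb: "block_op \<alpha> \<beta> (\<lambda>x. a * \<phi> x + \<psi> x) = (\<lambda>x. a * block_op \<alpha> \<beta> \<phi> x + block_op \<alpha> \<beta> \<psi> x)"
  by (simp add: block_op_def fun_eq_iff algebra_simps)

lemma bdd_op_block_op:
  assumes K: "0 \<le> K" and b: "\<forall>x\<in>X \<times> UNIV. cmod (\<alpha> x) \<le> K \<and> cmod (\<beta> x) \<le> K"
  shows "bdd_op (l2 (X \<times> UNIV)) (block_op \<alpha> \<beta>)"
  unfolding bdd_op_def using block_op_l2[OF _ K b] block_op_lincomb by blast

lemma block_op_finite_sum_split_le:
  assumes \<phi>: "\<phi> \<in> l2 (X \<times> UNIV)" and F: "finite F" and e: "0 \<le> e"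
    and small: "\<forall>x\<in>X \<times> UNIV. x \<notin> J \<longrightarrow> cmod (\<alpha> x) \<le> e \<and> cmod (\<beta> x) \<le> e"
  shows "(\<Sum>x\<in>F. (cmod (block_op \<alpha> \<beta> \<phi> x))\<^sup>2)
    \<le> (\<Sum>x\<in>F \<inter> J. (cmod (block_op \<alpha> \<beta> \<phi> x))\<^sup>2) + (2*e*l2_norm \<phi>)\<^sup>2"
proof -
  let ?sq = "\<lambda>x. (cmod (block_op \<alpha> \<beta> \<phi> x))\<^sup>2"
  have "(\<Sum>x\<in>F - J. ?sq x) = (\<Sum>x\<in>(F - J) \<inter> (X \<times> UNIV). ?sq x)"
    using F block_op_outside_zero[OF \<phi>, of _ \<alpha> \<beta>] by (intro sum.mono_neutral_right) auto
  also have "\<dots> \<le> (2*e*l2_norm \<phi>)\<^sup>2"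
    using F small \<phi> by (intro block_op_finite_sum_le[OF _ _ e]) (auto simp: mem_l2_iff)
  finally show ?thesis using F by (metis sum.Int_Diff add_left_mono)
qed

text \<open>On the finitely many levels \<open>\<le> m\<close> pointwise convergence suffices; beyond them the
  coefficients, hence the operator, are small.\<close>

lemma block_op_tendsto_zero:
  fixes X :: "'a set" and g :: "'a \<Rightarrow> nat"
  assumes fin: "\<And>n. finite {a\<in>X. g a \<le> n}"
    and dec: "\<And>e. e > 0 \<Longrightarrow> \<exists>n. \<forall>x\<in>X \<times> UNIV. n < g (fst x) \<longrightarrow> cmod (\<alpha> x) \<le> e \<and> cmod (\<beta> x) \<le> e"
    and h: "\<forall>n. h n \<in> l2 (X \<times> UNIV)" "\<forall>n. l2_norm (h n) \<le> B" "\<And>x. (\<lambda>n. h n x) \<longlonglongrightarrow> 0"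
  shows "(\<lambda>n. l2_norm (block_op \<alpha> \<beta> (h n))) \<longlonglongrightarrow> 0"
proof (rule LIMSEQ_I)
  fix \<epsilon> :: real assume \<epsilon>: "0 < \<epsilon>"
  have B0: "0 \<le> B" using h(2) l2_norm_nonneg order_trans by blast
  define e where "e = \<epsilon> / (4 * (B + 1))"
  have e: "0 < e" "(2*e*B)\<^sup>2 \<le> \<epsilon>\<^sup>2/4"
  proof -
    show "0 < e" using \<epsilon> B0 by (simp add: e_def)
    have "2*e*B \<le> \<epsilon>/2" unfolding e_def using B0 \<epsilon> by (simp add: field_simps)
    then show "(2*e*B)\<^sup>2 \<le> \<epsilon>\<^sup>2/4" using \<open>0 < e\<close> B0 power_mono[of "2*e*B" "\<epsilon>/2" 2] by (simp add: power_divide)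
  qed
  obtain m where m: "\<forall>x\<in>X \<times> UNIV. m < g (fst x) \<longrightarrow> cmod (\<alpha> x) \<le> e \<and> cmod (\<beta> x) \<le> e"
    using dec[OF e(1)] by blast
  define J where "J = {a\<in>X. g a \<le> m} \<times> (UNIV :: bool set)"
  have "(\<lambda>n. \<Sum>x\<in>J. (cmod (block_op \<alpha> \<beta> (h n) x))\<^sup>2) \<longlonglongrightarrow> (\<Sum>x\<in>J. (cmod (\<alpha> x * 0 + \<beta> x * 0))\<^sup>2)"
    unfolding block_op_def using h(3) by (intro tendsto_intros) auto
  then have "\<forall>\<^sub>F n in sequentially. (\<Sum>x\<in>J. (cmod (block_op \<alpha> \<beta> (h n) x))\<^sup>2) < \<epsilon>\<^sup>2/4"
    using \<epsilon> by (intro order_tendstoD(2)) auto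
  then obtain n0 where n0: "\<forall>n\<ge>n0. (\<Sum>x\<in>J. (cmod (block_op \<alpha> \<beta> (h n) x))\<^sup>2) < \<epsilon>\<^sup>2/4"
    unfolding eventually_sequentially by blast
  have "l2_norm (block_op \<alpha> \<beta> (h n)) \<le> 3/4*\<epsilon>" if n: "n0 \<le> n" for n
  proof (rule l2_by_finite_sums(2))
    fix F :: "('a \<times> bool) set" assume F: "finite F"
    let ?sq = "\<lambda>x. (cmod (block_op \<alpha> \<beta> (h n) x))\<^sup>2"
    have "(\<Sum>x\<in>F. ?sq x) \<le> (\<Sum>x\<in>F \<inter> J. ?sq x) + (2*e*l2_norm (h n))\<^sup>2"
      using m e(1) by (intro block_op_finite_sum_split_le[OF h(1)[rule_format] F]) (auto simp: J_def)
    also have "(\<Sum>x\<in>F \<inter> J. ?sq x) \<le> (\<Sum>x\<in>J. ?sq x)"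
      using fin unfolding J_def by (intro sum_mono2) auto
    also have "(2*e*l2_norm (h n))\<^sup>2 \<le> (2*e*B)\<^sup>2"
      using h(2) e(1) by (intro power_mono mult_left_mono) auto
    finally have "(\<Sum>x\<in>F. ?sq x) \<le> \<epsilon>\<^sup>2/4 + \<epsilon>\<^sup>2/4" using n0 n e(2) by force
    also have "\<dots> \<le> (3/4*\<epsilon>)\<^sup>2" by (simp add: power2_eq_square)
    finally show "(\<Sum>x\<in>F. ?sq x) \<le> (3/4*\<epsilon>)\<^sup>2" .
  qed (use \<epsilon> in simp)
  then show "\<exists>no. \<forall>n\<ge>no. norm (l2_norm (block_op \<alpha> \<beta> (h n)) - 0) < \<epsilon>"
    using \<epsilon> by (intro exI[of _ n0]) force
qed

lemma cpt_op_block_op: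
  fixes X :: "'a::countable set" and g :: "'a \<Rightarrow> nat"
  assumes fin: "\<And>n. finite {a\<in>X. g a \<le> n}"
    and K: "0 \<le> K" and bound: "\<forall>x\<in>X \<times> UNIV. cmod (\<alpha> x) \<le> K \<and> cmod (\<beta> x) \<le> K"
    and dec: "\<And>e. e > 0 \<Longrightarrow> \<exists>n. \<forall>x\<in>X \<times> UNIV. n < g (fst x) \<longrightarrow> cmod (\<alpha> x) \<le> e \<and> cmod (\<beta> x) \<le> e"
  shows "cpt_op (l2 (X \<times> UNIV)) (block_op \<alpha> \<beta>)"
  unfolding cpt_op_def
proof (intro conjI allI impI)
  let ?H = "l2 (X \<times> (UNIV::bool set))"
  show "bdd_op ?H (block_op \<alpha> \<beta>)" by (rule bdd_op_block_op[OF K bound])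
  fix f :: "nat \<Rightarrow> 'a \<times> bool \<Rightarrow> complex"
  assume f: "(\<forall>n. f n \<in> ?H) \<and> bounded (range (\<lambda>n. l2_norm (f n)))"
  obtain B where B: "\<forall>n. l2_norm (f n) \<le> B"
    using f unfolding bounded_iff by (metis abs_le_D1 rangeI real_norm_def)
  obtain r g0 where r: "strict_mono r" and g0: "g0 \<in> ?H" "l2_norm g0 \<le> B"
    and conv: "\<forall>x. (\<lambda>n. f (r n) x) \<longlonglongrightarrow> g0 x"
    using l2_bounded_pointwise_subseq[of f _ B] f B by blast
  define h where "h n = (\<lambda>x. f (r n) x - g0 x)" for n
  have "h n \<in> ?H" for n unfolding h_def using f g0 by (intro l2_diff) auto
  moreover have "l2_norm (h n) \<le> 2*B" for n
  proof -
    have "sq_norms (f (r n)) summable_on UNIV" "sq_norms g0 summable_on UNIV"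
      using f g0(1) by (auto simp: mem_l2_iff)
    then have "l2_norm (h n) \<le> l2_norm (f (r n)) + l2_norm g0"
      using l2_norm_diff_le unfolding h_def by blast
    also have "\<dots> \<le> B + B" using B g0(2) by (intro add_mono) auto
    finally show ?thesis by simp
  qed
  moreover have "(\<lambda>n. h n x) \<longlonglongrightarrow> 0" for x
    using tendsto_diff[OF conv[rule_format, of x] tendsto_const[of "g0 x"]] by (simp add: h_def)
  ultimately have "(\<lambda>n. l2_norm (block_op \<alpha> \<beta> (h n))) \<longlonglongrightarrow> 0"
    by (intro block_op_tendsto_zero[OF fin dec]) auto
  moreover have "(\<lambda>x. block_op \<alpha> \<beta> (f (r n)) x - block_op \<alpha> \<beta> g0 x) = block_op \<alpha> \<beta> (h n)" for n
    by (simp add: h_def block_op_def fun_eq_iff algebra_simps)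
  ultimately have "l2_conv (\<lambda>n. block_op \<alpha> \<beta> (f (r n))) (block_op \<alpha> \<beta> g0)"
    unfolding l2_conv_def by simp
  moreover have "block_op \<alpha> \<beta> g0 \<in> ?H" using block_op_l2[OF g0(1) K bound] by blast
  ultimately show "\<exists>r \<psi>. strict_mono r \<and> \<psi> \<in> ?H \<and> l2_conv (\<lambda>n. block_op \<alpha> \<beta> (f (r n))) \<psi>"
    using r by blast
qed

lemma sing_val_block_op_le:
  fixes X :: "'a set" and g :: "'a \<Rightarrow> nat"
  assumes fin: "finite {a\<in>X. g a \<le> n}" and card: "card ({a\<in>X. g a \<le> n} \<times> (UNIV::bool set)) \<le> k"
    and K: "0 \<le> K" "\<forall>x\<in>X \<times> UNIV. cmod (\<alpha> x) \<le> K \<and> cmod (\<beta> x) \<le> K"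
    and e: "0 \<le> e" "\<forall>x\<in>X \<times> UNIV. n < g (fst x) \<longrightarrow> cmod (\<alpha> x) \<le> e \<and> cmod (\<beta> x) \<le> e"
  shows "sing_val (l2 (X \<times> UNIV)) (block_op \<alpha> \<beta>) k \<le> 2*e"
proof -
  let ?H = "l2 (X \<times> (UNIV::bool set))"
  define \<alpha>n where "\<alpha>n x = (if g (fst x) \<le> n then \<alpha> x else 0)" for x
  define \<beta>n where "\<beta>n x = (if g (fst x) \<le> n then \<beta> x else 0)" for x
  define \<alpha>t where "\<alpha>t x = (if g (fst x) \<le> n then 0 else \<alpha> x)" for x
  define \<beta>t where "\<beta>t x = (if g (fst x) \<le> n then 0 else \<beta> x)" for x
  define J where "J = {a\<in>X. g a \<le> n} \<times> (UNIV::bool set)"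
  have bF: "bdd_op ?H (block_op \<alpha>n \<beta>n)" using K by (intro bdd_op_block_op[of K]) (auto simp: \<alpha>n_def \<beta>n_def)
  have supp: "\<forall>\<phi>\<in>?H. \<forall>x. x \<notin> J \<longrightarrow> block_op \<alpha>n \<beta>n \<phi> x = 0"
  proof (intro ballI allI impI)
    fix \<phi> x assume \<phi>: "\<phi> \<in> ?H" and x: "x \<notin> J"
    show "block_op \<alpha>n \<beta>n \<phi> x = 0"
    proof (cases "x \<in> X \<times> UNIV")
      case True
      then have "\<not> g (fst x) \<le> n" using x by (auto simp: J_def)
      then show ?thesis by (simp add: block_op_def \<alpha>n_def \<beta>n_def)
    next
      case False then show ?thesis using block_op_outside_zero[OF \<phi>] by blast
    qed
  qed
  have rk: "rank_le_op ?H k (block_op \<alpha>n \<beta>n)"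
    by (rule rank_le_op_finite_support[OF bF _ _ _ supp]) (use fin card in \<open>auto simp: J_def\<close>)
  have eq: "(\<lambda>\<phi> x. block_op \<alpha> \<beta> \<phi> x - block_op \<alpha>n \<beta>n \<phi> x) = block_op \<alpha>t \<beta>t"
    by (simp add: block_op_def \<alpha>n_def \<beta>n_def \<alpha>t_def \<beta>t_def fun_eq_iff)
  have bt: "\<forall>x\<in>X \<times> UNIV. cmod (\<alpha>t x) \<le> e \<and> cmod (\<beta>t x) \<le> e"
    using e by (auto simp: \<alpha>t_def \<beta>t_def)
  have "hop_norm ?H (block_op \<alpha>t \<beta>t) \<le> 2*e"
    using block_op_l2[OF _ e(1) bt] e(1) by (intro hop_norm_le) (auto simp: l2_zero)
  moreover have "sing_val ?H (block_op \<alpha> \<beta>) k \<le> hop_norm ?H (block_op \<alpha>t \<beta>t)"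
    using sing_val_le_hop_norm[OF bdd_op_block_op[OF K] rk] unfolding eq .
  ultimately show ?thesis by simp
qed

section \<open>The subshift of finite type\<close>

lemma seqdist_le_of_agree:
  assumes "\<forall>j<k. x j = y j"
  shows "seqdist x y \<le> exp (-(real k + 1))"
proof (cases "x = y")
  case True then show ?thesis by (simp add: seqdist_def)
next
  case False
  then obtain j where "x j \<noteq> y j" by auto
  then have L: "x (LEAST n. x n \<noteq> y n) \<noteq> y (LEAST n. x n \<noteq> y n)" by (rule LeastI)
  have "k \<le> (LEAST n. x n \<noteq> y n)"
  proof (rule ccontr)
    assume "\<not> k \<le> (LEAST n. x n \<noteq> y n)"
    then show False using assms L by auto
  qed
  then show ?thesis using False by (simp add: seqdist_def)
qed

lemma agree_of_seqdist_less:
  assumes "seqdist x y < exp (- real m)" "j < m"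
  shows "x j = y j"
proof (rule ccontr)
  assume ne: "x j \<noteq> y j"
  then have xy: "x \<noteq> y" by auto
  have "(LEAST n. x n \<noteq> y n) \<le> j" using ne by (rule Least_le)
  then have "exp (- real m) \<le> exp (-(real (LEAST n. x n \<noteq> y n) + 1))" using assms(2) by simp
  then show False using assms(1) xy by (simp add: seqdist_def)
qed

lemma Omega_seq_compact:
  fixes x :: "nat \<Rightarrow> nat \<Rightarrow> nat"
  assumes x: "\<forall>n. x n \<in> Omega A N"
  shows "\<exists>r z. strict_mono r \<and> z \<in> Omega A N \<and> (\<forall>k. eventually (\<lambda>n. \<forall>j<k. x (r n) j = z j) sequentially)"
proof -
  have "x n i \<in> {..<N}" for n i using x by (simp add: Omega_def)
  then obtain r z where r: "strict_mono r" and z: "\<forall>i. z i \<in> {..<N}"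
    and conv: "\<forall>i. (\<lambda>n. x (r n) i) \<longlonglongrightarrow> z i"
    using product_seq_compact[of x "\<lambda>_. {..<N}"] by (auto simp: finite_imp_compact)
  have ev: "eventually (\<lambda>n. x (r n) i = z i) sequentially" for i
    using conv unfolding nhds_discrete filterlim_principal by simp
  have evk: "eventually (\<lambda>n. \<forall>j<k. x (r n) j = z j) sequentially" for k
  proof -
    have "eventually (\<lambda>n. \<forall>j\<in>{..<k}. x (r n) j = z j) sequentially"
      by (rule eventually_ball_finite) (auto simp: ev)
    then show ?thesis by (auto elim!: eventually_mono)
  qed
  have "A (z i) (z (Suc i))" for i
  proof -
    obtain n where "x (r n) i = z i" "x (r n) (Suc i) = z (Suc i)"
      using eventually_conj[OF ev[of i] ev[of "Suc i"]] unfolding eventually_sequentially by blast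
    moreover have "A (x (r n) i) (x (r n) (Suc i))" using x by (simp add: Omega_def)
    ultimately show ?thesis by simp
  qed
  then have "z \<in> Omega A N" using z by (auto simp: Omega_def)
  then show ?thesis using r evk by blast
qed

lemma exp_neg_nat_less:
  assumes "0 < (d::real)"
  shows "\<exists>k::nat. exp (-(real k + 1)) < d"
proof -
  obtain k :: nat where "1/d < real k" using reals_Archimedean2 by blast
  also have "\<dots> < exp (real k + 1)" using exp_ge_add_one_self[of "real k + 1"] by simp
  finally have "inverse (exp (real k + 1)) < inverse (1/d)"
    using assms by (intro less_imp_inverse_less) auto
  then have "exp (-(real k + 1)) < d" by (simp only: exp_minus inverse_divide div_by_1)
  then show ?thesis ..
qed

lemma Cont_prefix_uniform:
  assumes b: "b \<in> Cont A N" and e: "e > 0"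
  shows "\<exists>m. \<forall>x\<in>Omega A N. \<forall>y\<in>Omega A N. (\<forall>j<m. x j = y j) \<longrightarrow> cmod (b x - b y) < e"
proof (rule ccontr)
  assume "\<not> ?thesis"
  then have "\<forall>m. \<exists>x y. x \<in> Omega A N \<and> y \<in> Omega A N \<and> (\<forall>j<m. x j = y j) \<and> \<not> cmod (b x - b y) < e"
    by blast
  then obtain xs ys where xy: "\<forall>m. xs m \<in> Omega A N \<and> ys m \<in> Omega A N \<and> (\<forall>j<m. xs m j = ys m j) \<and> \<not> cmod (b (xs m) - b (ys m)) < e"
    by metis
  then obtain r z where rz: "strict_mono r" "z \<in> Omega A N" "\<forall>k. eventually (\<lambda>n. \<forall>j<k. xs (r n) j = z j) sequentially"
    using Omega_seq_compact[of xs A N] by blast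
  have c: "\<forall>x\<in>Omega A N. \<forall>e>0. \<exists>d>0. \<forall>y\<in>Omega A N. seqdist x y < d \<longrightarrow> cmod (b y - b x) < e"
    using b by (simp add: Cont_def)
  have "\<exists>d>0. \<forall>y\<in>Omega A N. seqdist z y < d \<longrightarrow> cmod (b y - b z) < e/2"
    using c[rule_format, OF rz(2) half_gt_zero[OF e]] .
  then obtain d where d: "d > 0" "\<forall>y\<in>Omega A N. seqdist z y < d \<longrightarrow> cmod (b y - b z) < e/2"
    by blast
  obtain k :: nat where k: "exp (-(real k + 1)) < d" using exp_neg_nat_less[OF d(1)] by blast
  obtain n0 where n0: "\<forall>n\<ge>n0. \<forall>j<k. xs (r n) j = z j" using rz(3) unfolding eventually_sequentially by blast
  define n where "n = max n0 k"
  have "k \<le> r n" using seq_suble[OF rz(1), of n] by (simp add: n_def)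
  have ax: "\<forall>j<k. z j = xs (r n) j" using n0 by (simp add: n_def)
  have ay: "\<forall>j<k. z j = ys (r n) j" using ax xy \<open>k \<le> r n\<close> by (metis order_less_le_trans)
  have "cmod (b (xs (r n)) - b z) < e/2"
    using d(2) xy seqdist_le_of_agree[OF ax] k by (meson le_less_trans)
  moreover have "cmod (b (ys (r n)) - b z) < e/2"
    using d(2) xy seqdist_le_of_agree[OF ay] k by (meson le_less_trans)
  ultimately have "cmod (b (xs (r n)) - b (ys (r n))) < e"
    using norm_triangle_ineq4[of "b (xs (r n)) - b z" "b (ys (r n)) - b z"] by simp
  then show False using xy by blast
qed

definition seq_prefix :: "nat \<Rightarrow> (nat \<Rightarrow> nat) \<Rightarrow> nat list" where
  "seq_prefix m x = map x [0..<m]"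

lemma seq_prefix_eq_iff: "seq_prefix m x = seq_prefix m y \<longleftrightarrow> (\<forall>j<m. x j = y j)"
  unfolding seq_prefix_def by (simp add: list_eq_iff_nth_eq)

definition prefix_rep :: "(nat \<Rightarrow> nat \<Rightarrow> bool) \<Rightarrow> nat \<Rightarrow> nat \<Rightarrow> nat list \<Rightarrow> (nat \<Rightarrow> nat)" where
  "prefix_rep A N m p = (SOME y. y \<in> Omega A N \<and> seq_prefix m y = p)"

lemma prefix_rep_props:
  assumes "x \<in> Omega A N"
  shows "prefix_rep A N m (seq_prefix m x) \<in> Omega A N \<and> (\<forall>j<m. prefix_rep A N m (seq_prefix m x) j = x j)"
proof -
  have "prefix_rep A N m (seq_prefix m x) \<in> Omega A N \<and> seq_prefix m (prefix_rep A N m (seq_prefix m x)) = seq_prefix m x"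
    unfolding prefix_rep_def by (rule someI[of "\<lambda>y. y \<in> Omega A N \<and> seq_prefix m y = seq_prefix m x" x]) (simp add: assms)
  then show ?thesis using seq_prefix_eq_iff by blast
qed

lemma finite_seq_prefixes: "finite (seq_prefix m ` Omega A N)"
proof (rule finite_subset)
  show "seq_prefix m ` Omega A N \<subseteq> {xs. set xs \<subseteq> {..<N} \<and> length xs \<le> m}"
    by (auto simp: seq_prefix_def Omega_def)
qed (rule finite_lists_length_le, simp)

lemma Cont_bounded:
  assumes b: "b \<in> Cont A N"
  shows "\<exists>K\<ge>0. \<forall>x\<in>Omega A N. cmod (b x) \<le> K"
proof -
  obtain m where m: "\<forall>x\<in>Omega A N. \<forall>y\<in>Omega A N. (\<forall>j<m. x j = y j) \<longrightarrow> cmod (b x - b y) < 1"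
    using Cont_prefix_uniform[OF b, of 1] by auto
  define K where "K = 1 + (\<Sum>p\<in>seq_prefix m ` Omega A N. cmod (b (prefix_rep A N m p)))"
  have "cmod (b x) \<le> K" if x: "x \<in> Omega A N" for x
  proof -
    define y where "y = prefix_rep A N m (seq_prefix m x)"
    have y: "y \<in> Omega A N" "\<forall>j<m. x j = y j" using prefix_rep_props[OF x, of m] by (auto simp: y_def)
    then have "cmod (b x - b y) < 1" using m x by blast
    then have "cmod (b x) \<le> 1 + cmod (b y)" using norm_triangle_ineq2[of "b x" "b y"] by simp
    also have "cmod (b y) \<le> (\<Sum>p\<in>seq_prefix m ` Omega A N. cmod (b (prefix_rep A N m p)))"
      unfolding y_def using finite_seq_prefixes x by (intro member_le_sum) auto
    finally show ?thesis by (simp add: K_def)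
  qed
  moreover have "0 \<le> K" by (simp add: K_def sum_nonneg)
  ultimately show ?thesis by blast
qed

definition prefix_determined :: "(nat \<Rightarrow> nat \<Rightarrow> bool) \<Rightarrow> nat \<Rightarrow> nat \<Rightarrow> ((nat \<Rightarrow> nat) \<Rightarrow> complex) \<Rightarrow> bool" where
  "prefix_determined A N m b \<longleftrightarrow> (\<forall>x\<in>Omega A N. \<forall>y\<in>Omega A N. (\<forall>j<m. x j = y j) \<longrightarrow> b x = b y)"

definition loc_const :: "(nat \<Rightarrow> nat \<Rightarrow> bool) \<Rightarrow> nat \<Rightarrow> ((nat \<Rightarrow> nat) \<Rightarrow> complex) set" where
  "loc_const A N = {b. \<exists>m. prefix_determined A N m b}"

lemma prefix_determined_mono: "prefix_determined A N m b \<Longrightarrow> m \<le> m' \<Longrightarrow> prefix_determined A N m' b"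
  unfolding prefix_determined_def by (meson order_less_le_trans)

lemma prefix_determined_comb:
  "prefix_determined A N m b \<Longrightarrow> prefix_determined A N m c \<Longrightarrow>
    prefix_determined A N m (\<lambda>x. F (b x) (c x))"
  unfolding prefix_determined_def by metis

lemma loc_const_subset_Cont: "loc_const A N \<subseteq> Cont A N"
proof
  fix b assume "b \<in> loc_const A N"
  then obtain m where m: "prefix_determined A N m b" by (auto simp: loc_const_def)
  show "b \<in> Cont A N" unfolding Cont_def
  proof (intro CollectI ballI allI impI)
    fix x e assume x: "x \<in> Omega A N" and e: "(0::real) < e"
    show "\<exists>d>0. \<forall>y\<in>Omega A N. seqdist x y < d \<longrightarrow> cmod (b y - b x) < e"
    proof (intro exI[of _ "exp (- real m)"] conjI ballI impI)
      fix y assume "y \<in> Omega A N" "seqdist x y < exp (- real m)"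
      then have "\<forall>j<m. x j = y j" using agree_of_seqdist_less[of x y m] by simp
      then have "b x = b y" using m x \<open>y \<in> Omega A N\<close> unfolding prefix_determined_def by blast
      then show "cmod (b y - b x) < e" using e by simp
    qed simp
  qed
qed

lemma subalgebra_loc_const: "subalgebra (loc_const A N)"
  unfolding subalgebra_def
proof (intro conjI ballI allI)
  fix b c assume "b \<in> loc_const A N" "c \<in> loc_const A N"
  then obtain m m' where "prefix_determined A N m b" "prefix_determined A N m' c"
    by (auto simp: loc_const_def)
  then have "prefix_determined A N (max m m') b" "prefix_determined A N (max m m') c"
    by (auto elim: prefix_determined_mono)
  then show "(\<lambda>x. b x + c x) \<in> loc_const A N" "(\<lambda>x. b x * c x) \<in> loc_const A N"
    unfolding loc_const_def by (auto dest: prefix_determined_comb)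
next
  fix b :: "(nat \<Rightarrow> nat) \<Rightarrow> complex" and a assume "b \<in> loc_const A N"
  then show "(\<lambda>x. a * b x) \<in> loc_const A N"
    unfolding loc_const_def using prefix_determined_comb[of A N _ b b "\<lambda>u _. a * u"] by auto
qed

lemma fdense_loc_const: "fdense_in (loc_const A N) (Cont A N) (Omega A N)"
  unfolding fdense_in_def
proof (intro ballI allI impI)
  fix b e assume b: "b \<in> Cont A N" and e: "(0::real) < e"
  obtain m where m: "\<forall>x\<in>Omega A N. \<forall>y\<in>Omega A N. (\<forall>j<m. x j = y j) \<longrightarrow> cmod (b x - b y) < e"
    using Cont_prefix_uniform[OF b e] by auto
  define g where "g x = b (prefix_rep A N m (seq_prefix m x))" for x
  have "prefix_determined A N m g" unfolding prefix_determined_def g_def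
  proof (intro ballI impI)
    fix x y assume "x \<in> Omega A N" "y \<in> Omega A N" "\<forall>j<m. x j = y j"
    then have "seq_prefix m x = seq_prefix m y" using seq_prefix_eq_iff by blast
    then show "b (prefix_rep A N m (seq_prefix m x)) = b (prefix_rep A N m (seq_prefix m y))" by simp
  qed
  then have "g \<in> loc_const A N" unfolding loc_const_def mem_Collect_eq by (rule exI)
  moreover have "cmod (b x - g x) < e" if x: "x \<in> Omega A N" for x
  proof -
    have "\<forall>j<m. x j = prefix_rep A N m (seq_prefix m x) j" using prefix_rep_props[OF x, of m] by simp
    moreover have "prefix_rep A N m (seq_prefix m x) \<in> Omega A N" using prefix_rep_props[OF x, of m] by simp
    ultimately show ?thesis unfolding g_def using bspec[OF bspec[OF m x]] by blast
  qed
  ultimately show "\<exists>g\<in>loc_const A N. \<forall>x\<in>Omega A N. cmod (b x - g x) < e" by blast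
qed

lemma sdiam_cyl_le: "sdiam (cyl A N \<mu>) \<le> exp (-(real (length \<mu>) + 1))"
proof (cases "cyl A N \<mu> = {}")
  case True then show ?thesis by (simp add: sdiam_def)
next
  case False
  have "Sup {seqdist x y | x y. x \<in> cyl A N \<mu> \<and> y \<in> cyl A N \<mu>} \<le> exp (-(real (length \<mu>) + 1))"
  proof (rule cSup_least)
    show "{seqdist x y | x y. x \<in> cyl A N \<mu> \<and> y \<in> cyl A N \<mu>} \<noteq> {}" using False by blast
    fix d assume "d \<in> {seqdist x y | x y. x \<in> cyl A N \<mu> \<and> y \<in> cyl A N \<mu>}"
    then obtain x y where "x \<in> cyl A N \<mu>" "y \<in> cyl A N \<mu>" "d = seqdist x y" by blast
    then show "d \<le> exp (-(real (length \<mu>) + 1))" using seqdist_le_of_agree[of "length \<mu>" x y] by (auto simp: cyl_def)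
  qed
  then show ?thesis using False by (simp add: sdiam_def)
qed

lemma comparable_prefix_agree:
  assumes comp: "comparable A N tp tm"
  shows "\<exists>L. \<forall>\<mu>\<in>words A N. L + m \<le> length \<mu> \<longrightarrow> (\<forall>j<m. tp \<mu> j = tm \<mu> j)"
proof -
  obtain C where C: "C > 0" "\<forall>\<mu>\<in>words A N. seqdist (tp \<mu>) (tm \<mu>) \<le> C * sdiam (cyl A N \<mu>)"
    using comp unfolding comparable_def by blast
  obtain L :: nat where L: "C \<le> real L" using real_arch_simple by blast
  have "C < exp (real L)" using L exp_ge_add_one_self[of "real L"] by linarith
  have "\<forall>j<m. tp \<mu> j = tm \<mu> j" if \<mu>: "\<mu> \<in> words A N" "L + m \<le> length \<mu>" for \<mu>
  proof -
    have "seqdist (tp \<mu>) (tm \<mu>) \<le> C * exp (-(real (length \<mu>) + 1))"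
      using C \<mu> sdiam_cyl_le[of A N \<mu>] by (meson mult_left_mono less_imp_le order_trans)
    also have "\<dots> < exp (real L) * exp (-(real (length \<mu>) + 1))"
      using \<open>C < exp (real L)\<close> by simp
    also have "\<dots> = exp (real L - real (length \<mu>) - 1)" by (simp add: exp_add[symmetric])
    also have "\<dots> \<le> exp (- real m)" using \<mu>(2) by simp
    finally show ?thesis using agree_of_seqdist_less by blast
  qed
  then show ?thesis by blast
qed

lemma loc_const_eventually_agree:
  assumes comp: "comparable A N tp tm" and b: "b \<in> loc_const A N"
    and tp: "tp ` words A N \<subseteq> Omega A N" and tm: "tm ` words A N \<subseteq> Omega A N"
  shows "\<exists>L. \<forall>\<mu>\<in>words A N. L \<le> length \<mu> \<longrightarrow> b (tp \<mu>) = b (tm \<mu>)"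
proof -
  obtain m where m: "prefix_determined A N m b" using b by (auto simp: loc_const_def)
  obtain L where L: "\<forall>\<mu>\<in>words A N. L + m \<le> length \<mu> \<longrightarrow> (\<forall>j<m. tp \<mu> j = tm \<mu> j)"
    using comparable_prefix_agree[OF comp] by blast
  show ?thesis using L m tp tm unfolding prefix_determined_def by (intro exI[of _ "L + m"]) blast
qed

lemma finite_words_le: "finite {\<mu>\<in>words A N. length \<mu> \<le> n}"
  by (rule finite_subset[OF _ finite_lists_length_le[of "{..<N}" n]])
     (auto simp: words_def admissible_def)

lemma sum_powers_le: "(\<Sum>i\<le>n. (N::nat)^i) \<le> (N+1)^n"
proof (induction n)
  case 0 then show ?case by simp
next
  case (Suc n)
  have "(\<Sum>i\<le>Suc n. N^i) = (\<Sum>i\<le>n. N^i) + N * N^n" by simp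
  also have "\<dots> \<le> (N+1)^n + N * (N+1)^n"
    using Suc by (intro add_mono mult_left_mono power_mono) auto
  also have "\<dots> = (N+1)^Suc n" by (simp add: algebra_simps)
  finally show ?case .
qed

lemma card_words_le: "card ({\<mu>\<in>words A N. length \<mu> \<le> n} \<times> (UNIV::bool set)) \<le> 2 * (N+1)^n"
proof -
  have "card {\<mu>\<in>words A N. length \<mu> \<le> n} \<le> card {xs. set xs \<subseteq> {..<N} \<and> length xs \<le> n}"
    by (rule card_mono[OF finite_lists_length_le]) (auto simp: words_def admissible_def)
  also have "\<dots> = (\<Sum>i\<le>n. N^i)" by (simp add: card_lists_length_le)
  also have "\<dots> \<le> (N+1)^n" by (rule sum_powers_le)
  finally show ?thesis by (simp add: card_cartesian_product)
qed

section \<open>The Dirac operators\<close>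

definition D_max_dom ::
    "(nat \<Rightarrow> nat \<Rightarrow> bool) \<Rightarrow> nat \<Rightarrow> (nat list \<Rightarrow> real) \<Rightarrow> (nat list \<times> bool \<Rightarrow> complex) set" where
  "D_max_dom A N w = {\<phi> \<in> l2 (BP_index A N). D_fin w \<phi> \<in> l2 (BP_index A N)}"

lemma D_fin_apply: "D_fin w \<phi> x = complex_of_real (w (fst x)) * \<phi> (flip_comp x)"
  by (cases x) (simp add: D_fin_def flip_comp_def)

definition word_len :: "nat list \<times> bool \<Rightarrow> nat" where "word_len x = length (fst x)"

lemma trunc_in_fin_supp:
  assumes "\<phi> \<in> l2 (BP_index A N)"
  shows "trunc word_len n \<phi> \<in> fin_supp A N"
proof -
  have sub: "{x. trunc word_len n \<phi> x \<noteq> 0} \<subseteq> {\<mu>\<in>words A N. length \<mu> \<le> n} \<times> UNIV"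
    using assms by (auto simp: trunc_def word_len_def mem_l2_iff BP_index_def split: if_splits)
  then have fin: "finite {x. trunc word_len n \<phi> x \<noteq> 0}"
    by (rule finite_subset) (simp add: finite_words_le)
  have "trunc word_len n \<phi> \<in> l2 (BP_index A N)"
    using assms summable_sq_norms_finite_support[OF fin] by (auto simp: mem_l2_iff trunc_def)
  then show ?thesis using fin by (simp add: fin_supp_def)
qed

lemma D_fin_trunc: "D_fin w (trunc word_len n \<phi>) = trunc word_len n (D_fin w \<phi>)"
  by (simp add: D_fin_apply trunc_def word_len_def fun_eq_iff)

lemma D_fin_fin_supp_l2:
  assumes "\<phi> \<in> fin_supp A N"
  shows "D_fin w \<phi> \<in> l2 (BP_index A N)"
proof -
  have \<phi>: "\<phi> \<in> l2 (BP_index A N)" "finite {i. \<phi> i \<noteq> 0}" using assms by (auto simp: fin_supp_def)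
  have "{x. D_fin w \<phi> x \<noteq> 0} \<subseteq> flip_comp ` {i. \<phi> i \<noteq> 0}"
  proof
    fix x assume "x \<in> {x. D_fin w \<phi> x \<noteq> 0}"
    then have "\<phi> (flip_comp x) \<noteq> 0" by (auto simp: D_fin_apply)
    then show "x \<in> flip_comp ` {i. \<phi> i \<noteq> 0}" by (intro image_eqI[of x flip_comp "flip_comp x"]) auto
  qed
  then have fin: "finite {x. D_fin w \<phi> x \<noteq> 0}" using \<phi>(2) finite_subset by blast
  have "x \<notin> BP_index A N \<Longrightarrow> D_fin w \<phi> x = 0" for x
    using \<phi>(1) by (cases x) (auto simp: D_fin_apply mem_l2_iff BP_index_def flip_comp_def)
  then show ?thesis using summable_sq_norms_finite_support[OF fin] by (simp add: mem_l2_iff)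
qed

lemma fin_supp_subset_l2: "fin_supp A N \<subseteq> l2 (BP_index A N)" by (auto simp: fin_supp_def)

text \<open>The closure of \<open>D_fin w\<close> is the maximal multiplication operator: a graph limit is
  identified pointwise, and truncations to words of bounded length approximate any vector of the
  maximal domain in the graph norm.\<close>

lemma graph_limit_eq_D_fin:
  assumes f: "\<forall>n. f n \<in> fin_supp A N" "l2_conv f \<phi>" and \<phi>: "\<phi> \<in> l2 (BP_index A N)"
    and \<psi>: "\<psi> \<in> l2 (BP_index A N)" "l2_conv (\<lambda>n. D_fin w (f n)) \<psi>"
  shows "\<psi> = D_fin w \<phi>"
proof
  fix x
  have "(\<lambda>n. D_fin w (f n) x) \<longlonglongrightarrow> \<psi> x"
    using l2_conv_pointwise[OF _ \<psi>] D_fin_fin_supp_l2 f(1) by blast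
  moreover have "(\<lambda>n. D_fin w (f n) x) \<longlonglongrightarrow> D_fin w \<phi> x"
    unfolding D_fin_apply using l2_conv_pointwise[OF _ \<phi> f(2)] f(1) fin_supp_subset_l2
    by (intro tendsto_intros) blast
  ultimately show "\<psi> x = D_fin w \<phi> x" by (rule LIMSEQ_unique)
qed

lemma trunc_graph_approx:
  assumes "\<phi> \<in> D_max_dom A N w"
  shows "(\<forall>n. trunc word_len n \<phi> \<in> fin_supp A N) \<and> l2_conv (\<lambda>n. trunc word_len n \<phi>) \<phi> \<and>
    D_fin w \<phi> \<in> l2 (BP_index A N) \<and> l2_conv (\<lambda>n. D_fin w (trunc word_len n \<phi>)) (D_fin w \<phi>)"
  using assms trunc_in_fin_supp l2_conv_trunc unfolding D_fin_trunc
  by (auto simp: D_max_dom_def mem_l2_iff)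

lemma D_dom_eq_max_dom: "D_dom A N w = D_max_dom A N w"
proof
  show "D_dom A N w \<subseteq> D_max_dom A N w"
    unfolding D_dom_def closure_dom_def D_max_dom_def using graph_limit_eq_D_fin by blast
  show "D_max_dom A N w \<subseteq> D_dom A N w"
  proof
    fix \<phi> assume \<phi>: "\<phi> \<in> D_max_dom A N w"
    then have "\<phi> \<in> l2 (BP_index A N)" by (simp add: D_max_dom_def)
    with trunc_graph_approx[OF \<phi>] show "\<phi> \<in> D_dom A N w"
      unfolding D_dom_def closure_dom_def
      by (auto intro!: exI[of _ "\<lambda>n. trunc word_len n \<phi>"] exI[of _ "D_fin w \<phi>"])
  qed
qed

lemma D_op_eq_D_fin:
  assumes "\<phi> \<in> D_dom A N w"
  shows "D_op A N w \<phi> = D_fin w \<phi>"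
  unfolding D_op_def closure_op_def
proof (rule the_equality)
  show "\<exists>f. (\<forall>n. f n \<in> fin_supp A N) \<and> l2_conv f \<phi> \<and> D_fin w \<phi> \<in> l2 (BP_index A N) \<and>
      l2_conv (\<lambda>n. D_fin w (f n)) (D_fin w \<phi>)"
    using trunc_graph_approx[OF assms[unfolded D_dom_eq_max_dom]]
    by (intro exI[of _ "\<lambda>n. trunc word_len n \<phi>"])
  show "\<psi> = D_fin w \<phi>"
    if "\<exists>f. (\<forall>n. f n \<in> fin_supp A N) \<and> l2_conv f \<phi> \<and> \<psi> \<in> l2 (BP_index A N) \<and>
      l2_conv (\<lambda>n. D_fin w (f n)) \<psi>" for \<psi>
    using that assms graph_limit_eq_D_fin unfolding D_dom_eq_max_dom D_max_dom_def by blast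
qed

definition unit_vec :: "'i \<Rightarrow> 'i \<Rightarrow> complex" where "unit_vec p = (\<lambda>x. if x = p then 1 else 0)"

lemma unit_vec_fin_supp:
  assumes "p \<in> BP_index A N"
  shows "unit_vec p \<in> fin_supp A N"
proof -
  have fin: "finite {x. unit_vec p x \<noteq> 0}" by (simp add: unit_vec_def)
  then have "unit_vec p \<in> l2 (BP_index A N)"
    using assms summable_sq_norms_finite_support[OF fin] by (auto simp: mem_l2_iff unit_vec_def)
  then show ?thesis using fin by (simp add: fin_supp_def)
qed

lemma unit_vec_D_dom: "p \<in> BP_index A N \<Longrightarrow> unit_vec p \<in> D_dom A N w"
  using unit_vec_fin_supp D_fin_fin_supp_l2 fin_supp_subset_l2 unfolding D_dom_eq_max_dom D_max_dom_def by blast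

lemma bij_flip_comp: "bij_betw flip_comp UNIV UNIV"
  by (rule bij_betwI[of _ _ _ flip_comp]) auto

lemma D_fin_lincomb: "D_fin w (\<lambda>x. a * \<phi> x + \<psi> x) = (\<lambda>x. a * D_fin w \<phi> x + D_fin w \<psi> x)"
  by (simp add: D_fin_apply fun_eq_iff algebra_simps)

lemma BP_index_flip_comp: "x \<notin> BP_index A N \<Longrightarrow> flip_comp x \<notin> BP_index A N"
  by (cases x) (simp add: BP_index_def flip_comp_def)

lemma D_op_symmetric:
  assumes \<phi>: "\<phi> \<in> D_dom A N w" and \<eta>: "\<eta> \<in> D_dom A N w"
  shows "l2_inner (D_op A N w \<phi>) \<eta> = l2_inner \<phi> (D_op A N w \<eta>)"
proof -
  have "l2_inner (D_op A N w \<phi>) \<eta> = infsum (\<lambda>x. complex_of_real (w (fst x)) * \<phi> (flip_comp x) * cnj (\<eta> x)) UNIV"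
    by (simp add: l2_inner_def D_op_eq_D_fin[OF \<phi>] D_fin_apply)
  also have "\<dots> = infsum (\<lambda>x. complex_of_real (w (fst (flip_comp x))) * \<phi> (flip_comp (flip_comp x)) * cnj (\<eta> (flip_comp x))) UNIV"
    by (rule infsum_reindex_bij_betw[OF bij_flip_comp, symmetric])
  also have "\<dots> = l2_inner \<phi> (D_op A N w \<eta>)"
    by (simp add: l2_inner_def D_op_eq_D_fin[OF \<eta>] D_fin_apply algebra_simps)
  finally show ?thesis .
qed

lemma l2_inner_unit_vec: "l2_inner (unit_vec p) \<zeta> = cnj (\<zeta> p)"
  unfolding l2_inner_def by (subst infsum_singleton_support[where p=p]) (auto simp: unit_vec_def)

lemma l2_inner_D_op_unit_vec:
  assumes "p \<in> BP_index A N"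
  shows "l2_inner (D_op A N w (unit_vec p)) \<eta> = complex_of_real (w (fst p)) * cnj (\<eta> (flip_comp p))"
proof -
  have "l2_inner (D_op A N w (unit_vec p)) \<eta>
      = infsum (\<lambda>y. complex_of_real (w (fst y)) * unit_vec p (flip_comp y) * cnj (\<eta> y)) UNIV"
    by (simp add: l2_inner_def D_op_eq_D_fin[OF unit_vec_D_dom[OF assms]] D_fin_apply)
  also have "\<dots> = complex_of_real (w (fst (flip_comp p))) * unit_vec p (flip_comp (flip_comp p)) * cnj (\<eta> (flip_comp p))"
    by (rule infsum_singleton_support) (metis flip_comp_flip_comp mult_eq_0_iff unit_vec_def)
  finally show ?thesis by (simp add: unit_vec_def)
qed

text \<open>Testing the adjoint relation against the unit vectors identifies \<open>\<zeta>\<close> with \<open>D_fin w \<eta>\<close>.\<close>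

lemma D_adjoint_dom:
  assumes \<eta>: "\<eta> \<in> l2 (BP_index A N)" and \<zeta>: "\<zeta> \<in> l2 (BP_index A N)"
    and adj: "\<forall>\<phi>\<in>D_dom A N w. l2_inner (D_op A N w \<phi>) \<eta> = l2_inner \<phi> \<zeta>"
  shows "\<eta> \<in> D_dom A N w"
proof -
  have "\<zeta> p = D_fin w \<eta> p" for p
  proof (cases "p \<in> BP_index A N")
    case True
    have "cnj (\<zeta> p) = complex_of_real (w (fst p)) * cnj (\<eta> (flip_comp p))"
      using adj unit_vec_D_dom[OF True] l2_inner_D_op_unit_vec[OF True] l2_inner_unit_vec by metis
    then have "\<zeta> p = cnj (complex_of_real (w (fst p)) * cnj (\<eta> (flip_comp p)))" by (metis complex_cnj_cnj)
    then show ?thesis by (simp add: D_fin_apply)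
  next
    case False
    then have "\<zeta> p = 0" "\<eta> (flip_comp p) = 0"
      using l2_outside_zero[OF \<zeta>] l2_outside_zero[OF \<eta>] BP_index_flip_comp[OF False] by auto
    then show ?thesis by (simp add: D_fin_apply)
  qed
  then have "D_fin w \<eta> = \<zeta>" by auto
  then show ?thesis using \<eta> \<zeta> by (simp add: D_dom_eq_max_dom D_max_dom_def)
qed

lemma D_self_adjoint: "self_adjoint (l2 (BP_index A N)) (D_dom A N w) (D_op A N w)"
  unfolding self_adjoint_def
proof (intro conjI ballI allI)
  let ?H = "l2 (BP_index A N)"
  show "D_dom A N w \<subseteq> ?H" by (auto simp: D_dom_eq_max_dom D_max_dom_def)
  show "D_op A N w \<phi> \<in> ?H" if "\<phi> \<in> D_dom A N w" for \<phi>
    using that D_op_eq_D_fin[OF that] by (simp add: D_dom_eq_max_dom D_max_dom_def)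
  fix \<phi> \<psi> a assume \<phi>: "\<phi> \<in> D_dom A N w" and \<psi>: "\<psi> \<in> D_dom A N w"
  have l: "(\<lambda>x. a * \<phi> x + \<psi> x) \<in> D_max_dom A N w"
    using \<phi> \<psi> unfolding D_dom_eq_max_dom D_max_dom_def by (auto simp: D_fin_lincomb intro: l2_lincomb)
  then show "(\<lambda>x. a * \<phi> x + \<psi> x) \<in> D_dom A N w" by (simp add: D_dom_eq_max_dom)
  show "D_op A N w (\<lambda>x. a * \<phi> x + \<psi> x) = (\<lambda>x. a * D_op A N w \<phi> x + D_op A N w \<psi> x)"
    using D_op_eq_D_fin[OF \<phi>] D_op_eq_D_fin[OF \<psi>] D_op_eq_D_fin l D_fin_lincomb
    by (simp add: D_dom_eq_max_dom)
next
  fix \<phi> assume \<phi>: "\<phi> \<in> l2 (BP_index A N)"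
  have "trunc word_len n \<phi> \<in> D_dom A N w" for n
    using trunc_in_fin_supp[OF \<phi>] D_fin_fin_supp_l2 fin_supp_subset_l2
    unfolding D_dom_eq_max_dom D_max_dom_def by blast
  then show "\<exists>f. (\<forall>n. f n \<in> D_dom A N w) \<and> l2_conv f \<phi>"
    using \<phi> l2_conv_trunc by (intro exI[of _ "\<lambda>n. trunc word_len n \<phi>"]) (auto simp: mem_l2_iff)
next
  fix \<eta> assume \<eta>: "\<eta> \<in> l2 (BP_index A N)"
  show "\<eta> \<in> D_dom A N w \<longleftrightarrow>
      (\<exists>\<zeta>\<in>l2 (BP_index A N). \<forall>\<phi>\<in>D_dom A N w. l2_inner (D_op A N w \<phi>) \<eta> = l2_inner \<phi> \<zeta>)"
    using D_adjoint_dom[OF \<eta>] D_op_symmetric D_op_eq_D_fin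
    by (auto simp: D_dom_eq_max_dom D_max_dom_def)
qed (rule D_op_symmetric)

text \<open>For \<open>l\<^sup>2 = -1\<close> one has \<open>(D + l)(D - l) = D\<^sup>2 + 1\<close>, so the resolvent is \<open>(D - l)/(1 + w\<^sup>2)\<close>.\<close>

definition res_diag :: "(nat list \<Rightarrow> real) \<Rightarrow> complex \<Rightarrow> nat list \<times> bool \<Rightarrow> complex" where
  "res_diag w l x = - l / (1 + of_real (w (fst x)) * of_real (w (fst x)))"

definition res_off :: "(nat list \<Rightarrow> real) \<Rightarrow> nat list \<times> bool \<Rightarrow> complex" where
  "res_off w x = of_real (w (fst x)) / (1 + of_real (w (fst x)) * of_real (w (fst x)))"

definition res_op :: "(nat list \<Rightarrow> real) \<Rightarrow> complex \<Rightarrow> (nat list \<times> bool) hop" where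
  "res_op w l = block_op (res_diag w l) (res_off w)"

lemma one_plus_sq_nonzero: "1 + complex_of_real r * complex_of_real r \<noteq> 0"
proof -
  have "1 + complex_of_real r * complex_of_real r = complex_of_real (1 + r * r)" by simp
  moreover have "1 + r * r > 0" by (simp add: add_pos_nonneg)
  ultimately show ?thesis by (metis of_real_eq_0_iff order_less_irrefl)
qed

lemma res_formula_right_inv:
  assumes "l * l = -1" "1 + W * W \<noteq> (0::complex)"
  shows "W * ((-l*b + W*a)/(1+W*W)) + l * ((-l*a + W*b)/(1+W*W)) = a"
proof -
  have "W * (-l*b + W*a) + l*(-l*a + W*b) = (1+W*W)*a" using assms(1) by algebra
  moreover have "W * ((-l*b + W*a)/(1+W*W)) + l * ((-l*a + W*b)/(1+W*W)) = (W * (-l*b + W*a) + l*(-l*a + W*b)) / (1+W*W)"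
    by (simp only: times_divide_eq_right add_divide_distrib[symmetric])
  ultimately show ?thesis using assms(2) by simp
qed

lemma res_formula_left_inv:
  assumes "l * l = -1" "1 + W * W \<noteq> (0::complex)"
  shows "(-l * (W * b + l * a) + W * (W * a + l * b)) / (1 + W*W) = a"
proof -
  have "-l * (W * b + l * a) + W * (W * a + l * b) = (1+W*W)*a" using assms(1) by algebra
  then show ?thesis using assms(2) by simp
qed

lemma res_op_apply: "res_op w l \<phi> x = (- l * \<phi> x + of_real (w (fst x)) * \<phi> (flip_comp x)) / (1 + of_real (w (fst x)) * of_real (w (fst x)))"
  by (simp add: res_op_def res_diag_def res_off_def block_op_def add_divide_distrib diff_divide_distrib)

lemma D_fin_res_op:
  assumes "l * l = -1"
  shows "(\<lambda>x. D_fin w (res_op w l \<phi>) x + l * res_op w l \<phi> x) = \<phi>"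
proof
  fix x :: "nat list \<times> bool"
  let ?W = "complex_of_real (w (fst x))"
  have "D_fin w (res_op w l \<phi>) x + l * res_op w l \<phi> x
      = ?W * ((-l * \<phi> (flip_comp x) + ?W * \<phi> x) / (1 + ?W * ?W)) + l * ((-l * \<phi> x + ?W * \<phi> (flip_comp x)) / (1 + ?W * ?W))"
    by (simp add: D_fin_apply res_op_apply)
  also have "\<dots> = \<phi> x" by (rule res_formula_right_inv[OF assms one_plus_sq_nonzero])
  finally show "D_fin w (res_op w l \<phi>) x + l * res_op w l \<phi> x = \<phi> x" .
qed

lemma res_op_unique:
  assumes "l * l = -1" "(\<lambda>x. D_fin w \<psi> x + l * \<psi> x) = \<phi>"
  shows "\<psi> = res_op w l \<phi>"
proof
  fix x :: "nat list \<times> bool"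
  let ?W = "complex_of_real (w (fst x))"
  have e1: "\<phi> x = ?W * \<psi> (flip_comp x) + l * \<psi> x" using fun_cong[OF assms(2), of x] by (simp add: D_fin_apply)
  have e2: "\<phi> (flip_comp x) = ?W * \<psi> x + l * \<psi> (flip_comp x)" using fun_cong[OF assms(2), of "flip_comp x"] by (simp add: D_fin_apply)
  have "res_op w l \<phi> x = (-l * (?W * \<psi> (flip_comp x) + l * \<psi> x) + ?W * (?W * \<psi> x + l * \<psi> (flip_comp x))) / (1 + ?W * ?W)"
    by (simp add: res_op_apply e1 e2)
  also have "\<dots> = \<psi> x" by (rule res_formula_left_inv[OF assms(1) one_plus_sq_nonzero])
  finally show "\<psi> x = res_op w l \<phi> x" by simp
qed

lemma norm_div_one_plus_sq:
  "cmod (z / (1 + complex_of_real r * complex_of_real r)) = cmod z / (1 + r * r)"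
proof -
  have "1 + complex_of_real r * complex_of_real r = complex_of_real (1 + r * r)" by simp
  moreover have "0 \<le> 1 + r * r" by (simp add: add_nonneg_nonneg)
  ultimately have "cmod (1 + complex_of_real r * complex_of_real r) = 1 + r * r"
    by (simp only: norm_of_real abs_of_nonneg)
  then show ?thesis by (simp only: norm_divide)
qed

lemma div_one_plus_sq_le_one:
  fixes r :: real
  shows "\<bar>r\<bar> / (1 + r*r) \<le> 1" "1 / (1 + r*r) \<le> 1" "r * r / (1 + r*r) \<le> 1"
proof -
  have "\<bar>r\<bar> \<le> 1 + r*r"
  proof (cases "\<bar>r\<bar> \<le> 1")
    case False
    then have "\<bar>r\<bar> * 1 \<le> \<bar>r\<bar> * \<bar>r\<bar>" by (intro mult_left_mono) auto
    then show ?thesis by (simp add: abs_mult_self_eq)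
  qed (simp add: add_increasing2)
  moreover have "0 < 1 + r*r" by (simp add: add_pos_nonneg)
  ultimately show "\<bar>r\<bar> / (1 + r*r) \<le> 1" "1 / (1 + r*r) \<le> 1" "r * r / (1 + r*r) \<le> 1"
    by (simp_all add: divide_le_eq)
qed

lemma div_one_plus_sq_le_decay:
  fixes r :: real
  assumes "0 \<le> r"
  shows "r / (1 + r*r) \<le> 2 / (1 + r)" "1 / (1 + r*r) \<le> 2 / (1 + r)"
proof -
  have "0 \<le> (r - 1/2) * (r - 1/2)" "0 \<le> (r - 1/4) * (r - 1/4)" by simp_all
  then have "r * (1 + r) \<le> 2 * (1 + r*r)" "1 + r \<le> 2 * (1 + r*r)" by (simp_all add: algebra_simps)
  then show "r / (1 + r*r) \<le> 2 / (1 + r)" "1 / (1 + r*r) \<le> 2 / (1 + r)"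
    using assms by (simp_all add: field_simps add_pos_nonneg)
qed

lemma D_fin_res_op_eq_block_op:
  "D_fin w (res_op w l \<phi>) = block_op
     (\<lambda>x. of_real (w (fst x)) * of_real (w (fst x)) / (1 + of_real (w (fst x)) * of_real (w (fst x))))
     (\<lambda>x. - l * of_real (w (fst x)) / (1 + of_real (w (fst x)) * of_real (w (fst x)))) \<phi>"
proof
  fix x
  have "c \<noteq> 0 \<Longrightarrow> W * ((-l*b + W*a)/c) = W*W/c * a + (-l*W/c) * b" for W a b c :: complex
    by (simp add: field_simps)
  then show "D_fin w (res_op w l \<phi>) x = block_op
     (\<lambda>x. of_real (w (fst x)) * of_real (w (fst x)) / (1 + of_real (w (fst x)) * of_real (w (fst x))))
     (\<lambda>x. - l * of_real (w (fst x)) / (1 + of_real (w (fst x)) * of_real (w (fst x)))) \<phi> x"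
    unfolding D_fin_apply res_op_apply block_op_def fst_flip_comp flip_comp_flip_comp
    using one_plus_sq_nonzero by blast
qed

lemma res_op_D_dom:
  assumes l: "cmod l = 1" and \<phi>: "\<phi> \<in> l2 (BP_index A N)"
  shows "res_op w l \<phi> \<in> D_dom A N w"
proof -
  have H: "\<phi> \<in> l2 (words A N \<times> UNIV)" using \<phi> by (simp add: BP_index_def)
  have "res_op w l \<phi> \<in> l2 (words A N \<times> UNIV)"
    unfolding res_op_def using l div_one_plus_sq_le_one
    by (intro block_op_l2[OF H, of 1, THEN conjunct1]) (auto simp: norm_div_one_plus_sq res_diag_def res_off_def)
  moreover have "D_fin w (res_op w l \<phi>) \<in> l2 (words A N \<times> UNIV)"
    unfolding D_fin_res_op_eq_block_op using l div_one_plus_sq_le_one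
    by (intro block_op_l2[OF H, of 1, THEN conjunct1])
       (auto simp: norm_div_one_plus_sq norm_mult abs_mult_self_eq)
  ultimately show ?thesis by (simp add: D_dom_eq_max_dom D_max_dom_def BP_index_def)
qed

lemma resolvent_eq_res_op:
  assumes l: "cmod l = 1" "l * l = -1" and \<phi>: "\<phi> \<in> l2 (BP_index A N)"
  shows "resolvent (D_dom A N w) (D_op A N w) l \<phi> = res_op w l \<phi>"
  unfolding resolvent_def
proof (rule the_equality)
  have d: "res_op w l \<phi> \<in> D_dom A N w" by (rule res_op_D_dom[OF l(1) \<phi>])
  show "res_op w l \<phi> \<in> D_dom A N w \<and> (\<lambda>x. D_op A N w (res_op w l \<phi>) x + l * res_op w l \<phi> x) = \<phi>"
    using d D_fin_res_op[OF l(2)] D_op_eq_D_fin[OF d] by simp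
  fix \<psi> assume "\<psi> \<in> D_dom A N w \<and> (\<lambda>x. D_op A N w \<psi> x + l * \<psi> x) = \<phi>"
  then show "\<psi> = res_op w l \<phi>" using res_op_unique[OF l(2)] D_op_eq_D_fin by metis
qed

section \<open>The unbounded Fredholm modules\<close>

definition pi_coef :: "(nat list \<Rightarrow> nat \<Rightarrow> nat) \<Rightarrow> (nat list \<Rightarrow> nat \<Rightarrow> nat) \<Rightarrow>
    ((nat \<Rightarrow> nat) \<Rightarrow> complex) \<Rightarrow> nat list \<times> bool \<Rightarrow> complex" where
  "pi_coef tp tm b x = (if snd x then b (tp (fst x)) else b (tm (fst x)))"

lemma pi_tau_eq_block_op: "pi_tau tp tm b \<phi> = block_op (pi_coef tp tm b) (\<lambda>_. 0) \<phi>"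
  by (auto simp: pi_tau_def block_op_def pi_coef_def fun_eq_iff)

lemma pi_coef_bounded:
  assumes "tp ` words A N \<subseteq> Omega A N" "tm ` words A N \<subseteq> Omega A N" "b \<in> Cont A N"
  shows "\<exists>K\<ge>0. \<forall>x\<in>words A N \<times> UNIV. cmod (pi_coef tp tm b x) \<le> K"
  using assms Cont_bounded[OF assms(3)] by (fastforce simp: pi_coef_def)

lemma l2_BP_index: "l2 (BP_index A N) = l2 (words A N \<times> UNIV)" by (simp add: BP_index_def)

lemma pi_tau_cong_Omega:
  assumes tp: "tp ` words A N \<subseteq> Omega A N" and tm: "tm ` words A N \<subseteq> Omega A N"
    and bc: "\<forall>x\<in>Omega A N. b x = c x" and \<phi>: "\<phi> \<in> l2 (BP_index A N)"
  shows "pi_tau tp tm b \<phi> = pi_tau tp tm c \<phi>"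
proof
  fix x :: "nat list \<times> bool"
  show "pi_tau tp tm b \<phi> x = pi_tau tp tm c \<phi> x"
  proof (cases "fst x \<in> words A N")
    case True
    then have "tp (fst x) \<in> Omega A N" "tm (fst x) \<in> Omega A N" using tp tm by auto
    then show ?thesis using bc by (cases x) (auto simp: pi_tau_def)
  next
    case False
    then have "\<phi> x = 0" using l2_outside_zero[OF \<phi>] by (cases x) (auto simp: BP_index_def)
    then show ?thesis by (cases x) (auto simp: pi_tau_def)
  qed
qed

lemma star_rep_pi_tau:
  assumes tp: "tp ` words A N \<subseteq> Omega A N" and tm: "tm ` words A N \<subseteq> Omega A N"
  shows "star_rep (Cont A N) (Omega A N) (l2 (BP_index A N)) (pi_tau tp tm)"
  unfolding star_rep_def
proof (intro conjI ballI allI impI)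
  fix b assume b: "b \<in> Cont A N"
  obtain K where "K \<ge> 0" "\<forall>x\<in>words A N \<times> UNIV. cmod (pi_coef tp tm b x) \<le> K"
    using pi_coef_bounded[OF tp tm b] by blast
  then have "bdd_op (l2 (words A N \<times> UNIV)) (block_op (pi_coef tp tm b) (\<lambda>_. 0))"
    by (intro bdd_op_block_op[of K]) auto
  then show "bdd_op (l2 (BP_index A N)) (pi_tau tp tm b)"
    unfolding l2_BP_index pi_tau_eq_block_op[abs_def] by simp
next
  show "pi_tau tp tm b \<phi> = pi_tau tp tm c \<phi>"
    if "\<forall>x\<in>Omega A N. b x = c x" "\<phi> \<in> l2 (BP_index A N)" for b c \<phi>
    using pi_tau_cong_Omega[OF tp tm that] .
next
  fix b c \<phi> show "pi_tau tp tm (\<lambda>x. b x + c x) \<phi> = (\<lambda>i. pi_tau tp tm b \<phi> i + pi_tau tp tm c \<phi> i)"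
    by (auto simp: pi_tau_def fun_eq_iff algebra_simps)
next
  fix b a \<phi> show "pi_tau tp tm (\<lambda>x. a * b x) \<phi> = (\<lambda>i. a * pi_tau tp tm b \<phi> i)"
    by (auto simp: pi_tau_def fun_eq_iff algebra_simps)
next
  fix b c \<phi> show "pi_tau tp tm (\<lambda>x. b x * c x) \<phi> = pi_tau tp tm b (pi_tau tp tm c \<phi>)"
    by (auto simp: pi_tau_def fun_eq_iff algebra_simps)
next
  fix b \<phi> \<psi> show "l2_inner (pi_tau tp tm b \<phi>) \<psi> = l2_inner \<phi> (pi_tau tp tm (\<lambda>x. cnj (b x)) \<psi>)"
    unfolding l2_inner_def by (rule arg_cong[where f="\<lambda>f. infsum f UNIV"]) (auto simp: pi_tau_def fun_eq_iff)
qed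

lemma grade_eq_block_op: "grade snd \<phi> = block_op (\<lambda>x. if snd x then 1 else -1) (\<lambda>_. 0) \<phi>"
  by (auto simp: grade_def block_op_def fun_eq_iff)

lemma grade_l2: "\<phi> \<in> l2 (BP_index A N) \<Longrightarrow> grade snd \<phi> \<in> l2 (BP_index A N)"
  unfolding grade_eq_block_op l2_BP_index by (rule block_op_l2[of _ _ 1, THEN conjunct1]) auto

lemma D_fin_grade: "D_fin w (grade snd \<phi>) = (\<lambda>i. - grade snd (D_fin w \<phi>) i)"
  by (auto simp: D_fin_apply grade_def fun_eq_iff flip_comp_def)

lemma grade_minus: "(\<lambda>i. - grade snd \<phi> i) = grade snd (\<lambda>i. - \<phi> i)"
  by (auto simp: grade_def fun_eq_iff)

lemma D_op_grading:
  assumes "\<phi> \<in> D_dom A N w"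
  shows "grade snd \<phi> \<in> D_dom A N w \<and> D_op A N w (grade snd \<phi>) = (\<lambda>i. - grade snd (D_op A N w \<phi>) i)"
proof -
  have \<phi>: "\<phi> \<in> l2 (BP_index A N)" "D_fin w \<phi> \<in> l2 (BP_index A N)" using assms by (auto simp: D_dom_eq_max_dom D_max_dom_def)
  have "D_fin w (grade snd \<phi>) \<in> l2 (BP_index A N)"
    unfolding D_fin_grade grade_minus by (intro grade_l2 l2_uminus \<phi>(2))
  then have g: "grade snd \<phi> \<in> D_dom A N w" using grade_l2[OF \<phi>(1)] by (simp add: D_dom_eq_max_dom D_max_dom_def)
  show ?thesis using g D_op_eq_D_fin[OF g] D_op_eq_D_fin[OF assms] D_fin_grade by simp
qed

lemma pi_tau_grade: "pi_tau tp tm b (grade snd \<phi>) = grade snd (pi_tau tp tm b \<phi>)"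
  by (auto simp: pi_tau_def grade_def fun_eq_iff)

definition unbounded_weight :: "(nat list \<Rightarrow> real) \<Rightarrow> bool" where
  "unbounded_weight w \<longleftrightarrow> (\<forall>\<mu>. 0 \<le> w \<mu>) \<and> (\<forall>M. \<exists>n. \<forall>\<mu>. n < length \<mu> \<longrightarrow> M \<le> w \<mu>)"

lemma unbounded_weight_w_exp: "unbounded_weight w_exp"
  unfolding unbounded_weight_def
proof (intro conjI allI)
  fix M :: real
  obtain n :: nat where n: "M \<le> real n" using real_arch_simple by blast
  have "M \<le> w_exp \<mu>" if "n < length \<mu>" for \<mu>
  proof -
    have "M \<le> real (length \<mu>)" using n that by linarith
    also have "\<dots> \<le> exp (real (length \<mu>))" using exp_ge_add_one_self[of "real (length \<mu>)"] by linarith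
    finally show ?thesis by (simp add: w_exp_def)
  qed
  then show "\<exists>n. \<forall>\<mu>. n < length \<mu> \<longrightarrow> M \<le> w_exp \<mu>" by blast
qed (simp add: w_exp_def)

lemma unbounded_weight_w_s:
  assumes s: "0 < s"
  shows "unbounded_weight (w_s s)"
  unfolding unbounded_weight_def
proof (intro conjI allI)
  fix M :: real
  obtain n :: nat where n: "max M 0 powr (1/s) \<le> real n" using real_arch_simple by blast
  have "M \<le> w_s s \<mu>" if "n < length \<mu>" for \<mu>
  proof -
    have "max M 0 powr (1/s) \<le> real (length \<mu>)" using n that by linarith
    then have "(max M 0 powr (1/s)) powr s \<le> real (length \<mu>) powr s" using s by (intro powr_mono2) auto
    moreover have "(max M 0 powr (1/s)) powr s = max M 0" using s by (simp add: powr_powr)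
    ultimately show ?thesis by (simp add: w_s_def)
  qed
  then show "\<exists>n. \<forall>\<mu>. n < length \<mu> \<longrightarrow> M \<le> w_s s \<mu>" by blast
qed (simp add: w_s_def)

lemma pi_tau_resolvent_eq:
  assumes "cmod l = 1" "l * l = -1" "\<phi> \<in> l2 (BP_index A N)"
  shows "pi_tau tp tm b (resolvent (D_dom A N w) (D_op A N w) l \<phi>) =
    block_op (\<lambda>x. pi_coef tp tm b x * res_diag w l x) (\<lambda>x. pi_coef tp tm b x * res_off w x) \<phi>"
  unfolding resolvent_eq_res_op[OF assms] pi_tau_eq_block_op res_op_def
  by (simp add: block_op_def fun_eq_iff algebra_simps)

lemma res_coefs_le:
  assumes l: "cmod l = 1" and v: "0 \<le> v" "v \<le> w (fst x)" and K: "cmod c \<le> K"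
  shows "cmod (c * res_diag w l x) \<le> 2 * K / (1 + v)" "cmod (c * res_off w x) \<le> 2 * K / (1 + v)"
proof -
  let ?r = "w (fst x)"
  have K0: "0 \<le> K" using K norm_ge_zero order_trans by blast
  have dec: "2 / (1 + ?r) \<le> 2 / (1 + v)" using v by (intro divide_left_mono) auto
  have "cmod (res_diag w l x) = 1 / (1 + ?r * ?r)" "cmod (res_off w x) = ?r / (1 + ?r * ?r)"
    using l v by (simp_all add: res_diag_def res_off_def norm_div_one_plus_sq)
  then have "cmod (res_diag w l x) \<le> 2 / (1 + v)" "cmod (res_off w x) \<le> 2 / (1 + v)"
    using div_one_plus_sq_le_decay[of ?r] dec v by auto
  then have "cmod c * cmod (res_diag w l x) \<le> K * (2 / (1 + v))" "cmod c * cmod (res_off w x) \<le> K * (2 / (1 + v))"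
    using mult_mono[OF K _ K0 norm_ge_zero] by blast+
  then show "cmod (c * res_diag w l x) \<le> 2 * K / (1 + v)" "cmod (c * res_off w x) \<le> 2 * K / (1 + v)"
    by (simp_all add: norm_mult mult.commute[of 2 K])
qed

lemma pi_tau_resolvent_block_bounds:
  assumes l: "cmod l = 1" "l * l = -1" and w: "unbounded_weight w"
    and K: "\<forall>x\<in>words A N \<times> UNIV. cmod (pi_coef tp tm b x) \<le> K"
  defines "\<alpha> \<equiv> \<lambda>x. pi_coef tp tm b x * res_diag w l x" and "\<beta> \<equiv> \<lambda>x. pi_coef tp tm b x * res_off w x"
  shows "\<And>\<phi>. \<phi> \<in> l2 (words A N \<times> UNIV) \<Longrightarrow>
      pi_tau tp tm b (resolvent (D_dom A N w) (D_op A N w) l \<phi>) = block_op \<alpha> \<beta> \<phi>"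
    and "\<And>v. 0 \<le> v \<Longrightarrow> \<forall>x\<in>words A N \<times> UNIV. v \<le> w (fst x) \<longrightarrow>
      cmod (\<alpha> x) \<le> 2 * K / (1 + v) \<and> cmod (\<beta> x) \<le> 2 * K / (1 + v)"
    and "\<forall>x\<in>words A N \<times> UNIV. cmod (\<alpha> x) \<le> 2 * K \<and> cmod (\<beta> x) \<le> 2 * K"
proof -
  show "pi_tau tp tm b (resolvent (D_dom A N w) (D_op A N w) l \<phi>) = block_op \<alpha> \<beta> \<phi>"
    if "\<phi> \<in> l2 (words A N \<times> UNIV)" for \<phi>
    using pi_tau_resolvent_eq[OF l, of \<phi>] that unfolding \<alpha>_def \<beta>_def l2_BP_index by blast
  show decay: "\<forall>x\<in>words A N \<times> UNIV. v \<le> w (fst x) \<longrightarrow>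
      cmod (\<alpha> x) \<le> 2 * K / (1 + v) \<and> cmod (\<beta> x) \<le> 2 * K / (1 + v)" if "0 \<le> v" for v
    using res_coefs_le[OF l(1) that] K unfolding \<alpha>_def \<beta>_def by blast
  have "\<forall>\<mu>. 0 \<le> w \<mu>" using w by (simp add: unbounded_weight_def)
  then show "\<forall>x\<in>words A N \<times> UNIV. cmod (\<alpha> x) \<le> 2 * K \<and> cmod (\<beta> x) \<le> 2 * K"
    using decay[of 0] by simp
qed

lemma bdd_op_pi_tau_resolvent:
  assumes l: "cmod l = 1" "l * l = -1" and w: "unbounded_weight w" and b: "b \<in> Cont A N"
    and tp: "tp ` words A N \<subseteq> Omega A N" and tm: "tm ` words A N \<subseteq> Omega A N"
  shows "bdd_op (l2 (BP_index A N)) (\<lambda>\<phi>. pi_tau tp tm b (resolvent (D_dom A N w) (D_op A N w) l \<phi>))"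
proof -
  obtain K where K: "K \<ge> 0" "\<forall>x\<in>words A N \<times> UNIV. cmod (pi_coef tp tm b x) \<le> K"
    using pi_coef_bounded[OF tp tm b] by blast
  note blk = pi_tau_resolvent_block_bounds[OF l w K(2)]
  have "bdd_op (l2 (words A N \<times> UNIV)) (block_op (\<lambda>x. pi_coef tp tm b x * res_diag w l x)
      (\<lambda>x. pi_coef tp tm b x * res_off w x))"
    using K(1) by (intro bdd_op_block_op[OF _ blk(3)]) simp
  then show ?thesis unfolding l2_BP_index by (subst bdd_op_cong[OF blk(1)])
qed

lemma cpt_op_pi_tau_resolvent:
  assumes l: "cmod l = 1" "l * l = -1" and w: "unbounded_weight w" and b: "b \<in> Cont A N"
    and tp: "tp ` words A N \<subseteq> Omega A N" and tm: "tm ` words A N \<subseteq> Omega A N"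
  shows "cpt_op (l2 (BP_index A N)) (\<lambda>\<phi>. pi_tau tp tm b (resolvent (D_dom A N w) (D_op A N w) l \<phi>))"
proof -
  obtain K where K: "K \<ge> 0" "\<forall>x\<in>words A N \<times> UNIV. cmod (pi_coef tp tm b x) \<le> K"
    using pi_coef_bounded[OF tp tm b] by blast
  note blk = pi_tau_resolvent_block_bounds[OF l w K(2)]
  have decay: "\<exists>n. \<forall>x\<in>words A N \<times> UNIV. n < length (fst x) \<longrightarrow>
      cmod (pi_coef tp tm b x * res_diag w l x) \<le> e \<and> cmod (pi_coef tp tm b x * res_off w x) \<le> e"
    if e: "e > 0" for e
  proof -
    obtain n where n: "\<forall>\<mu>. n < length \<mu> \<longrightarrow> 2 * K / e \<le> w \<mu>"
      using w unfolding unbounded_weight_def by blast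
    have small: "2 * K / (1 + 2 * K / e) \<le> e" using K(1) e by (simp add: field_simps)
    have "0 \<le> 2 * K / e" using K(1) e by simp
    then show ?thesis using blk(2)[of "2 * K / e"] n small by (meson order_trans)
  qed
  have "cpt_op (l2 (words A N \<times> UNIV)) (block_op (\<lambda>x. pi_coef tp tm b x * res_diag w l x)
      (\<lambda>x. pi_coef tp tm b x * res_off w x))"
    using K(1) by (intro cpt_op_block_op[OF finite_words_le _ blk(3) decay]) simp_all
  then show ?thesis unfolding l2_BP_index by (subst cpt_op_cong[OF blk(1)])
qed

lemma pi_tau_D_dom:
  assumes tp: "tp ` words A N \<subseteq> Omega A N" and tm: "tm ` words A N \<subseteq> Omega A N"
    and b: "b \<in> Cont A N" and \<phi>: "\<phi> \<in> D_dom A N w"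
  shows "pi_tau tp tm b \<phi> \<in> D_dom A N w"
proof -
  obtain K where K: "K \<ge> 0" "\<forall>x\<in>words A N \<times> UNIV. cmod (pi_coef tp tm b x) \<le> K"
    using pi_coef_bounded[OF tp tm b] by blast
  have \<phi>H: "\<phi> \<in> l2 (words A N \<times> UNIV)" "D_fin w \<phi> \<in> l2 (words A N \<times> UNIV)"
    using \<phi> by (auto simp: D_dom_eq_max_dom D_max_dom_def BP_index_def)
  have "pi_tau tp tm b \<phi> \<in> l2 (words A N \<times> UNIV)"
    unfolding pi_tau_eq_block_op using K by (intro block_op_l2[OF \<phi>H(1), of K, THEN conjunct1]) auto
  moreover have "D_fin w (pi_tau tp tm b \<phi>) = block_op (\<lambda>x. pi_coef tp tm b (flip_comp x)) (\<lambda>_. 0) (D_fin w \<phi>)"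
    by (simp add: pi_tau_eq_block_op block_op_def D_fin_apply fun_eq_iff)
  moreover have "block_op (\<lambda>x. pi_coef tp tm b (flip_comp x)) (\<lambda>_. 0) (D_fin w \<phi>) \<in> l2 (words A N \<times> UNIV)"
    using K by (intro block_op_l2[OF \<phi>H(2), of K, THEN conjunct1]) (auto simp: flip_comp_def)
  ultimately show ?thesis by (simp add: D_dom_eq_max_dom D_max_dom_def BP_index_def)
qed

lemma commutator_D_pi_tau:
  assumes "\<phi> \<in> D_dom A N w" "pi_tau tp tm b \<phi> \<in> D_dom A N w"
  shows "(\<lambda>i. D_op A N w (pi_tau tp tm b \<phi>) i - pi_tau tp tm b (D_op A N w \<phi>) i) =
    block_op (\<lambda>_. 0) (\<lambda>x. of_real (w (fst x)) * (pi_coef tp tm b (flip_comp x) - pi_coef tp tm b x)) \<phi>"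
  unfolding D_op_eq_D_fin[OF assms(1)] D_op_eq_D_fin[OF assms(2)]
  by (simp add: pi_tau_eq_block_op block_op_def D_fin_apply fun_eq_iff algebra_simps)

text \<open>Comparability forces a locally constant \<open>b\<close> to take the same value at \<open>\<tau>\<^sub>+(\<mu>)\<close> and
  \<open>\<tau>\<^sub>-(\<mu>)\<close> for all long words \<open>\<mu>\<close>, so the off-diagonal commutator coefficient vanishes outside a
  finite set, however fast the weight grows.\<close>

lemma loc_const_lip_alg:
  assumes tp: "tp ` words A N \<subseteq> Omega A N" and tm: "tm ` words A N \<subseteq> Omega A N"
    and comp: "comparable A N tp tm" and b: "b \<in> loc_const A N"
  shows "b \<in> lip_alg (Cont A N) (pi_tau tp tm) (D_dom A N w) (D_op A N w)"
proof -
  have bC: "b \<in> Cont A N" using b loc_const_subset_Cont by blast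
  obtain L where L: "\<forall>\<mu>\<in>words A N. L \<le> length \<mu> \<longrightarrow> b (tp \<mu>) = b (tm \<mu>)"
    using loc_const_eventually_agree[OF comp b tp tm] by blast
  define \<gamma> where "\<gamma> x = of_real (w (fst x)) * (pi_coef tp tm b (flip_comp x) - pi_coef tp tm b x)" for x
  define J where "J = {\<mu>\<in>words A N. length \<mu> \<le> L} \<times> (UNIV :: bool set)"
  define K where "K = (\<Sum>x\<in>J. cmod (\<gamma> x))"
  have K0: "0 \<le> K" unfolding K_def by (simp add: sum_nonneg)
  have \<gamma>K: "\<forall>x\<in>words A N \<times> UNIV. cmod ((\<lambda>_. 0::complex) x) \<le> K \<and> cmod (\<gamma> x) \<le> K"
  proof (intro ballI conjI)
    fix x :: "nat list \<times> bool" assume x: "x \<in> words A N \<times> UNIV"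
    show "cmod (\<gamma> x) \<le> K"
    proof (cases "length (fst x) \<le> L")
      case True
      then have "x \<in> J" using x by (auto simp: J_def)
      then show ?thesis unfolding K_def J_def using finite_words_le by (intro member_le_sum) auto
    next
      case False
      then have "pi_coef tp tm b (flip_comp x) = pi_coef tp tm b x"
        using L x by (auto simp: pi_coef_def flip_comp_def)
      then show ?thesis using K0 by (simp add: \<gamma>_def)
    qed
  qed (use K0 in simp)
  have "l2_norm (\<lambda>i. D_op A N w (pi_tau tp tm b \<phi>) i - pi_tau tp tm b (D_op A N w \<phi>) i) \<le> (2*K) * l2_norm \<phi>"
    if \<phi>: "\<phi> \<in> D_dom A N w" for \<phi>
  proof -
    have "\<phi> \<in> l2 (words A N \<times> UNIV)" using \<phi> by (auto simp: D_dom_eq_max_dom D_max_dom_def BP_index_def)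
    then show ?thesis
      unfolding commutator_D_pi_tau[OF \<phi> pi_tau_D_dom[OF tp tm bC \<phi>]] \<gamma>_def[symmetric]
      using block_op_l2[OF _ K0 \<gamma>K] by simp
  qed
  then show ?thesis unfolding lip_alg_def using bC pi_tau_D_dom[OF tp tm bC] by blast
qed

lemma fdense_lip_alg:
  assumes "tp ` words A N \<subseteq> Omega A N" "tm ` words A N \<subseteq> Omega A N" "comparable A N tp tm"
  shows "fdense_in (lip_alg (Cont A N) (pi_tau tp tm) (D_dom A N w) (D_op A N w)) (Cont A N) (Omega A N)"
  using fdense_loc_const loc_const_lip_alg[OF assms] unfolding fdense_in_def by (meson subsetD)

lemma even_ufm_BP:
  assumes tp: "tp ` words A N \<subseteq> Omega A N" and tm: "tm ` words A N \<subseteq> Omega A N"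
    and comp: "comparable A N tp tm" and w: "unbounded_weight w"
  shows "even_ufm (Cont A N) (Omega A N) (BP_index A N) snd (pi_tau tp tm) (D_dom A N w) (D_op A N w)"
  unfolding even_ufm_def
proof (intro conjI ballI)
  show "star_rep (Cont A N) (Omega A N) (l2 (BP_index A N)) (pi_tau tp tm)" by (rule star_rep_pi_tau[OF tp tm])
  show "pi_tau tp tm b (grade snd \<phi>) = grade snd (pi_tau tp tm b \<phi>)" for b \<phi> by (rule pi_tau_grade)
  show "self_adjoint (l2 (BP_index A N)) (D_dom A N w) (D_op A N w)" by (rule D_self_adjoint)
  show "grade snd \<phi> \<in> D_dom A N w" "D_op A N w (grade snd \<phi>) = (\<lambda>i. - grade snd (D_op A N w \<phi>) i)"
    if "\<phi> \<in> D_dom A N w" for \<phi> using D_op_grading[OF that] by blast+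
  show "cpt_op (l2 (BP_index A N)) (\<lambda>\<phi>. pi_tau tp tm b (resolvent (D_dom A N w) (D_op A N w) \<i> \<phi>))"
    "cpt_op (l2 (BP_index A N)) (\<lambda>\<phi>. pi_tau tp tm b (resolvent (D_dom A N w) (D_op A N w) (- \<i>) \<phi>))"
    if "b \<in> Cont A N" for b using cpt_op_pi_tau_resolvent[OF _ _ w that tp tm] by simp_all
  show "fdense_in (lip_alg (Cont A N) (pi_tau tp tm) (D_dom A N w) (D_op A N w)) (Cont A N) (Omega A N)"
    by (rule fdense_lip_alg[OF tp tm comp])
qed

lemma pi_tau_faithful:
  assumes tp: "tp ` words A N \<subseteq> Omega A N" and tm: "tm ` words A N \<subseteq> Omega A N"
    and dense: "sdense_in (tp ` words A N \<union> tm ` words A N) (Omega A N)"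
    and b: "b \<in> Cont A N" and z: "\<forall>\<phi>\<in>l2 (BP_index A N). pi_tau tp tm b \<phi> = (\<lambda>i. 0)"
  shows "\<forall>x\<in>Omega A N. b x = 0"
proof -
  have zS: "b y = 0" if yS: "y \<in> tp ` words A N \<union> tm ` words A N" for y
  proof -
    obtain \<mu> where \<mu>: "\<mu> \<in> words A N" "y = tp \<mu> \<or> y = tm \<mu>" using yS by blast
    have "unit_vec (\<mu>, True) \<in> l2 (BP_index A N)" "unit_vec (\<mu>, False) \<in> l2 (BP_index A N)"
      using unit_vec_fin_supp[of "(\<mu>, True)" A N] unit_vec_fin_supp[of "(\<mu>, False)" A N] \<mu>(1) fin_supp_subset_l2
      by (auto simp: BP_index_def)
    then have "pi_tau tp tm b (unit_vec (\<mu>, True)) (\<mu>, True) = 0" "pi_tau tp tm b (unit_vec (\<mu>, False)) (\<mu>, False) = 0"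
      using z by auto
    then have "b (tp \<mu>) = 0" "b (tm \<mu>) = 0" by (auto simp: pi_tau_def unit_vec_def)
    then show ?thesis using \<mu>(2) by auto
  qed
  show ?thesis
  proof (rule ballI, rule ccontr)
    fix x assume x: "x \<in> Omega A N" and nz: "b x \<noteq> 0"
    have c: "\<forall>x\<in>Omega A N. \<forall>e>0. \<exists>d>0. \<forall>y\<in>Omega A N. seqdist x y < d \<longrightarrow> cmod (b y - b x) < e"
      using b by (simp add: Cont_def)
    obtain d where d: "d > 0" "\<forall>y\<in>Omega A N. seqdist x y < d \<longrightarrow> cmod (b y - b x) < cmod (b x)"
      using c[rule_format, OF x] nz by (meson zero_less_norm_iff)
    obtain y where y: "y \<in> tp ` words A N \<union> tm ` words A N" "seqdist x y < d"
      using dense x d(1) unfolding sdense_in_def by blast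
    have "y \<in> Omega A N" using y(1) tp tm by blast
    then have "cmod (b y - b x) < cmod (b x)" using d(2) y(2) by blast
    then show False using zS[OF y(1)] by simp
  qed
qed

section \<open>Summability\<close>

text \<open>The \<open>k\<close>-th singular value is estimated on the blocks \<open>2 M\<^sup>n \<le> k < 2 M\<^sup>n\<^sup>+\<^sup>1\<close>, \<open>M = N + 1\<close>: there
  are at most \<open>2 M\<^sup>n\<close> basis vectors indexed by words of length \<open>\<le> n\<close>, and on longer words the
  weight is at least its value at length \<open>n + 1\<close>.\<close>

lemma exists_level:
  fixes M k :: nat
  assumes M: "M \<ge> 2" and k: "k \<ge> 2"
  shows "\<exists>n. 2*M^n \<le> k \<and> k < 2*M^(Suc n)"
proof -
  define P where "P n \<longleftrightarrow> k < 2*M^(Suc n)" for n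
  have "k < 2^k" by (rule less_exp)
  also have "\<dots> \<le> M^k" using M by (intro power_mono) auto
  also have "\<dots> \<le> M^(Suc k)" using M by (intro power_increasing) auto
  also have "\<dots> \<le> 2 * M^(Suc k)" by simp
  finally have Pk: "P k" by (simp add: P_def)
  define n where "n = (LEAST n. P n)"
  have Pn: "P n" unfolding n_def using Pk by (rule LeastI)
  show ?thesis
  proof (cases n)
    case 0
    then show ?thesis using Pn k by (intro exI[of _ n]) (simp add: P_def)
  next
    case (Suc m)
    then have "\<not> P m" unfolding n_def using not_less_Least[of m P] by (metis lessI)
    then show ?thesis using Pn Suc by (intro exI[of _ n]) (simp add: P_def)
  qed
qed

lemma exp_level_le_inverse_sq:
  fixes M k n :: nat
  assumes k: "2 \<le> k" "k < 2 * M^(Suc n)"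
  shows "exp (-(real n + 1) * (2 * real M)) \<le> 4 * inverse (real k ^ 2)"
proof -
  define E where "E = exp (real M * real (Suc n))"
  have "real M \<le> exp (real M)" using exp_ge_add_one_self[of "real M"] by linarith
  then have "real M ^ (Suc n) \<le> exp (real M) ^ (Suc n)" by (intro power_mono) auto
  also have "\<dots> = E" unfolding E_def by (metis exp_of_nat_mult mult.commute)
  finally have "real M ^ Suc n \<le> E" .
  moreover have "real k < 2 * real M ^ Suc n" using k(2) by (metis of_nat_less_iff of_nat_mult of_nat_numeral of_nat_power)
  ultimately have kE: "real k / 2 < E" by linarith
  have "-(real n + 1) * (2 * real M) = - (real M * real (Suc n) + real M * real (Suc n))"
    by (simp add: algebra_simps)
  then have "exp (-(real n + 1) * (2 * real M)) = inverse (E * E)"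
    by (simp only: exp_minus E_def exp_add)
  also have "\<dots> \<le> inverse ((real k / 2) * (real k / 2))"
    using kE k(1) by (intro le_imp_inverse_le mult_mono) auto
  also have "\<dots> = 4 * inverse (real k ^ 2)" by (simp add: power2_eq_square field_simps)
  finally show ?thesis .
qed

lemma summable_powr_of_exp_decay:
  fixes s :: "nat \<Rightarrow> real" and C :: real and M :: nat
  assumes C: "C > 0" and M: "M \<ge> 2" and s0: "\<And>k. 0 \<le> s k"
    and sb: "\<And>n k. 2*M^n \<le> k \<Longrightarrow> s k \<le> C * exp (-(real n + 1))"
  shows "summable (\<lambda>k. s k powr (2 * real M))"
proof (rule summable_comparison_test'[where N=2])
  let ?p = "2 * real M"
  show "summable (\<lambda>k. 4 * C powr ?p * inverse (real k ^ 2))"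
    by (intro summable_mult inverse_power_summable) simp
  fix k :: nat assume k: "2 \<le> k"
  obtain n where n: "2*M^n \<le> k" "k < 2*M^(Suc n)" using exists_level[OF M k] by blast
  have "s k powr ?p \<le> (C * exp (-(real n + 1))) powr ?p"
    using sb[OF n(1)] s0 by (intro powr_mono2) auto
  also have "\<dots> = C powr ?p * exp (-(real n + 1) * ?p)"
    using C by (simp add: powr_mult exp_powr_real)
  also have "\<dots> \<le> C powr ?p * (4 * inverse (real k ^ 2))"
    using exp_level_le_inverse_sq[OF k n(2)] by (intro mult_left_mono) auto
  finally show "norm (s k powr ?p) \<le> 4 * C powr ?p * inverse (real k ^ 2)" by simp
qed

lemma ln_le_level:
  fixes M k n :: nat
  assumes M: "M \<ge> 2" and k: "2 \<le> k" "k < 2 * M^(Suc n)"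
  shows "ln (real k) \<le> (real n + 1) * ln (2 * real M)"
proof -
  have "real k < 2 * real M ^ Suc n" using k(2) by (metis of_nat_less_iff of_nat_mult of_nat_numeral of_nat_power)
  then have "ln (real k) < ln (2 * real M ^ Suc n)"
    using k by (subst ln_less_cancel_iff) auto
  also have "\<dots> = ln 2 + real (Suc n) * ln (real M)"
    using M by (simp add: ln_mult ln_realpow algebra_simps)
  also have "\<dots> \<le> real (Suc n) * ln 2 + real (Suc n) * ln (real M)"
    using M by (intro add_mono mult_right_mono) (auto intro: ln_ge_zero)
  also have "\<dots> = (real n + 1) * ln (2 * real M)"
    using M by (simp add: ln_mult algebra_simps)
  finally show ?thesis by simp
qed

lemma bigo_ln_powr_of_level_decay:
  fixes s :: "nat \<Rightarrow> real" and C \<sigma> :: real and M :: nat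
  assumes C: "C > 0" and M: "M \<ge> 2" and s0: "\<And>k. 0 \<le> s k" and \<sigma>: "1/2 \<le> \<sigma>"
    and sb: "\<And>n k. 2*M^n \<le> k \<Longrightarrow> s k \<le> C / (real n + 1) powr \<sigma>"
  shows "s \<in> O(\<lambda>k. ln (real k) powr (-1/2))"
proof (rule bigoI)
  define L0 where "L0 = ln (2 * real M)"
  have L0: "0 < L0" using M by (simp add: L0_def)
  show "\<forall>\<^sub>F k in at_top. norm (s k) \<le> (C * L0 powr (1/2)) * norm (ln (real k) powr (-1/2))"
    unfolding eventually_at_top_linorder
  proof (intro exI[of _ 2] allI impI)
    fix k :: nat assume k: "2 \<le> k"
    obtain n where n: "2*M^n \<le> k" "k < 2*M^(Suc n)" using exists_level[OF M k] by blast
    have lk: "0 < ln (real k)" using k by simp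
    have "ln (real k) / L0 \<le> real n + 1"
      using ln_le_level[OF M k n(2)] L0 by (simp add: L0_def field_simps)
    then have "(ln (real k) / L0) powr (1/2) \<le> (real n + 1) powr (1/2)"
      using lk L0 by (intro powr_mono2) auto
    also have "\<dots> \<le> (real n + 1) powr \<sigma>" using \<sigma> by (intro powr_mono) auto
    finally have a: "(ln (real k) / L0) powr (1/2) \<le> (real n + 1) powr \<sigma>" .
    have "s k \<le> C / (real n + 1) powr \<sigma>" by (rule sb[OF n(1)])
    also have "\<dots> \<le> C / (ln (real k) / L0) powr (1/2)"
      using a lk L0 C by (intro divide_left_mono) auto
    also have "\<dots> = (C * L0 powr (1/2)) * ln (real k) powr (-1/2)"
      using lk L0 by (simp add: powr_divide powr_minus_divide)
    finally show "norm (s k) \<le> (C * L0 powr (1/2)) * norm (ln (real k) powr (-1/2))"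
      using s0[of k] by simp
  qed
qed

lemma states_nonempty:
  assumes "tp ` words A N \<subseteq> Omega A N"
  shows "N \<ge> 1"
proof -
  have "[] \<in> words A N" by (simp add: words_def admissible_def)
  then have "tp [] 0 < N" using assms by (auto simp: Omega_def)
  then show ?thesis by simp
qed

lemma sing_val_pi_tau_resolvent_level:
  assumes l: "cmod l = 1" "l * l = -1" and w: "unbounded_weight w" and b: "b \<in> Cont A N"
    and tp: "tp ` words A N \<subseteq> Omega A N" and tm: "tm ` words A N \<subseteq> Omega A N"
  shows "\<exists>C>0. \<forall>n k v. 2 * (N+1)^n \<le> k \<longrightarrow> 0 < v \<longrightarrow> (\<forall>\<mu>. n < length \<mu> \<longrightarrow> v \<le> w \<mu>) \<longrightarrow>
    sing_val (l2 (BP_index A N)) (\<lambda>\<phi>. pi_tau tp tm b (resolvent (D_dom A N w) (D_op A N w) l \<phi>)) k \<le> C / v"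
proof -
  obtain K where K: "K \<ge> 0" "\<forall>x\<in>words A N \<times> UNIV. cmod (pi_coef tp tm b x) \<le> K"
    using pi_coef_bounded[OF tp tm b] by blast
  note blk = pi_tau_resolvent_block_bounds[OF l w K(2)]
  have "sing_val (l2 (BP_index A N)) (\<lambda>\<phi>. pi_tau tp tm b (resolvent (D_dom A N w) (D_op A N w) l \<phi>)) k
      \<le> 4 * (K + 1) / v"
    if k: "2 * (N+1)^n \<le> k" and v: "0 < v" "\<forall>\<mu>. n < length \<mu> \<longrightarrow> v \<le> w \<mu>" for n k v
  proof -
    have "sing_val (l2 (words A N \<times> UNIV)) (block_op (\<lambda>x. pi_coef tp tm b x * res_diag w l x)
        (\<lambda>x. pi_coef tp tm b x * res_off w x)) k \<le> 2 * (2 * K / (1 + v))"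
    proof (rule sing_val_block_op_le[OF finite_words_le _ _ blk(3)])
      show "card ({a \<in> words A N. length a \<le> n} \<times> (UNIV::bool set)) \<le> k"
        using card_words_le[of A N n] k by linarith
      show "\<forall>x\<in>words A N \<times> UNIV. n < length (fst x) \<longrightarrow>
          cmod (pi_coef tp tm b x * res_diag w l x) \<le> 2 * K / (1 + v) \<and>
          cmod (pi_coef tp tm b x * res_off w x) \<le> 2 * K / (1 + v)"
        using blk(2)[of v] v by auto
    qed (use K(1) v in simp_all)
    also have "\<dots> \<le> 4 * (K + 1) / v"
      using K(1) v(1) by (simp add: field_simps)
    finally show ?thesis unfolding l2_BP_index by (subst sing_val_cong[OF blk(1)])
  qed
  moreover have "0 < 4 * (K + 1)" using K(1) by simp
  ultimately show ?thesis by blast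
qed

lemma Li_half_pi_tau_resolvent:
  assumes l: "cmod l = 1" "l * l = -1" and b: "b \<in> Cont A N"
    and tp: "tp ` words A N \<subseteq> Omega A N" and tm: "tm ` words A N \<subseteq> Omega A N"
    and s: "1/2 \<le> s"
  shows "Li_half (l2 (BP_index A N)) (\<lambda>\<phi>. pi_tau tp tm b (resolvent (D_dom A N (w_s s)) (D_op A N (w_s s)) l \<phi>))"
  unfolding Li_half_def
proof
  have w: "unbounded_weight (w_s s)" using s by (intro unbounded_weight_w_s) simp
  show "cpt_op (l2 (BP_index A N)) (\<lambda>\<phi>. pi_tau tp tm b (resolvent (D_dom A N (w_s s)) (D_op A N (w_s s)) l \<phi>))"
    by (rule cpt_op_pi_tau_resolvent[OF l w b tp tm])
  obtain C where C: "C > 0" and sv: "\<forall>n k v. 2 * (N+1)^n \<le> k \<longrightarrow> 0 < v \<longrightarrow> (\<forall>\<mu>. n < length \<mu> \<longrightarrow> v \<le> w_s s \<mu>) \<longrightarrow>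
      sing_val (l2 (BP_index A N)) (\<lambda>\<phi>. pi_tau tp tm b (resolvent (D_dom A N (w_s s)) (D_op A N (w_s s)) l \<phi>)) k \<le> C / v"
    using sing_val_pi_tau_resolvent_level[OF l w b tp tm] by blast
  show "(\<lambda>k. sing_val (l2 (BP_index A N)) (\<lambda>\<phi>. pi_tau tp tm b (resolvent (D_dom A N (w_s s)) (D_op A N (w_s s)) l \<phi>)) k)
      \<in> O(\<lambda>k. ln (real k) powr (-1/2))"
  proof (rule bigo_ln_powr_of_level_decay[OF C _ _ s])
    show "2 \<le> N + 1" using states_nonempty[OF tp] by simp
    show "0 \<le> sing_val (l2 (BP_index A N)) (\<lambda>\<phi>. pi_tau tp tm b (resolvent (D_dom A N (w_s s)) (D_op A N (w_s s)) l \<phi>)) k" for k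
      by (rule sing_val_nonneg[OF bdd_op_pi_tau_resolvent[OF l w b tp tm]])
    have "(real n + 1) powr s \<le> w_s s \<mu>" if "n < length \<mu>" for n \<mu>
      unfolding w_s_def using s that by (intro powr_mono2) auto
    then show "sing_val (l2 (BP_index A N)) (\<lambda>\<phi>. pi_tau tp tm b (resolvent (D_dom A N (w_s s)) (D_op A N (w_s s)) l \<phi>)) k
        \<le> C / (real n + 1) powr s" if "2 * (N+1)^n \<le> k" for n k
      using sv that by simp
  qed
qed

lemma schatten_pi_tau_resolvent:
  assumes l: "cmod l = 1" "l * l = -1" and b: "b \<in> Cont A N"
    and tp: "tp ` words A N \<subseteq> Omega A N" and tm: "tm ` words A N \<subseteq> Omega A N"
  shows "schatten (l2 (BP_index A N)) (2 * real (N+1))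
    (\<lambda>\<phi>. pi_tau tp tm b (resolvent (D_dom A N w_exp) (D_op A N w_exp) l \<phi>))"
  unfolding schatten_def
proof
  note w = unbounded_weight_w_exp
  show "cpt_op (l2 (BP_index A N)) (\<lambda>\<phi>. pi_tau tp tm b (resolvent (D_dom A N w_exp) (D_op A N w_exp) l \<phi>))"
    by (rule cpt_op_pi_tau_resolvent[OF l w b tp tm])
  obtain C where C: "C > 0" and sv: "\<forall>n k v. 2 * (N+1)^n \<le> k \<longrightarrow> 0 < v \<longrightarrow> (\<forall>\<mu>. n < length \<mu> \<longrightarrow> v \<le> w_exp \<mu>) \<longrightarrow>
      sing_val (l2 (BP_index A N)) (\<lambda>\<phi>. pi_tau tp tm b (resolvent (D_dom A N w_exp) (D_op A N w_exp) l \<phi>)) k \<le> C / v"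
    using sing_val_pi_tau_resolvent_level[OF l w b tp tm] by blast
  show "summable (\<lambda>k. sing_val (l2 (BP_index A N)) (\<lambda>\<phi>. pi_tau tp tm b (resolvent (D_dom A N w_exp) (D_op A N w_exp) l \<phi>)) k
      powr (2 * real (N+1)))"
  proof (rule summable_powr_of_exp_decay[OF C])
    show "2 \<le> N + 1" using states_nonempty[OF tp] by simp
    show "0 \<le> sing_val (l2 (BP_index A N)) (\<lambda>\<phi>. pi_tau tp tm b (resolvent (D_dom A N w_exp) (D_op A N w_exp) l \<phi>)) k" for k
      by (rule sing_val_nonneg[OF bdd_op_pi_tau_resolvent[OF l w b tp tm]])
    fix n k :: nat assume k: "2 * (N+1)^n \<le> k"
    have "\<forall>\<mu>. n < length \<mu> \<longrightarrow> exp (real n + 1) \<le> w_exp \<mu>" by (simp add: w_exp_def)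
    then have "sing_val (l2 (BP_index A N)) (\<lambda>\<phi>. pi_tau tp tm b (resolvent (D_dom A N w_exp) (D_op A N w_exp) l \<phi>)) k
        \<le> C / exp (real n + 1)"
      using sv k by simp
    then show "sing_val (l2 (BP_index A N)) (\<lambda>\<phi>. pi_tau tp tm b (resolvent (D_dom A N w_exp) (D_op A N w_exp) l \<phi>)) k
        \<le> C * exp (-(real n + 1))"
      by (simp only: exp_minus divide_inverse)
  qed
qed

lemma theta_summable_BP_s:
  assumes tp: "tp ` words A N \<subseteq> Omega A N" and tm: "tm ` words A N \<subseteq> Omega A N"
    and comp: "comparable A N tp tm" and s: "1/2 \<le> s"
  shows "theta_summable (Cont A N) (Omega A N) (BP_index A N) (pi_tau tp tm)
    (D_dom A N (w_s s)) (D_op A N (w_s s))"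
  unfolding theta_summable_def
proof (intro exI[of _ "loc_const A N"] conjI ballI)
  show "loc_const A N \<subseteq> lip_alg (Cont A N) (pi_tau tp tm) (D_dom A N (w_s s)) (D_op A N (w_s s))"
    using loc_const_lip_alg[OF tp tm comp] by blast
  fix b assume "b \<in> loc_const A N"
  then have b: "b \<in> Cont A N" using loc_const_subset_Cont by blast
  show "Li_half (l2 (BP_index A N)) (\<lambda>\<phi>. pi_tau tp tm b (resolvent (D_dom A N (w_s s)) (D_op A N (w_s s)) \<i> \<phi>))"
    "Li_half (l2 (BP_index A N)) (\<lambda>\<phi>. pi_tau tp tm b (resolvent (D_dom A N (w_s s)) (D_op A N (w_s s)) (- \<i>) \<phi>))"
    using Li_half_pi_tau_resolvent[OF _ _ b tp tm s] by simp_all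
qed (rule subalgebra_loc_const, rule fdense_loc_const)

lemma finitely_summable_BP_exp:
  assumes tp: "tp ` words A N \<subseteq> Omega A N" and tm: "tm ` words A N \<subseteq> Omega A N"
    and comp: "comparable A N tp tm"
  shows "finitely_summable (Cont A N) (Omega A N) (BP_index A N) (pi_tau tp tm)
    (D_dom A N w_exp) (D_op A N w_exp)"
  unfolding finitely_summable_def p_summable_def
proof (intro exI[of _ "2 * real (N+1)"] exI[of _ "loc_const A N"] conjI ballI)
  show "loc_const A N \<subseteq> lip_alg (Cont A N) (pi_tau tp tm) (D_dom A N w_exp) (D_op A N w_exp)"
    using loc_const_lip_alg[OF tp tm comp] by blast
  fix b assume "b \<in> loc_const A N"
  then have b: "b \<in> Cont A N" using loc_const_subset_Cont by blast
  show "schatten (l2 (BP_index A N)) (2 * real (N+1))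
      (\<lambda>\<phi>. pi_tau tp tm b (resolvent (D_dom A N w_exp) (D_op A N w_exp) \<i> \<phi>))"
    "schatten (l2 (BP_index A N)) (2 * real (N+1))
      (\<lambda>\<phi>. pi_tau tp tm b (resolvent (D_dom A N w_exp) (D_op A N w_exp) (- \<i>) \<phi>))"
    using schatten_pi_tau_resolvent[OF _ _ b tp tm] by simp_all
qed (simp, rule subalgebra_loc_const, rule fdense_loc_const)

lemma spectral_triple_BP:
  assumes tp: "tp ` words A N \<subseteq> Omega A N" and tm: "tm ` words A N \<subseteq> Omega A N"
    and dense: "sdense_in (tp ` words A N \<union> tm ` words A N) (Omega A N)"
    and ufm: "even_ufm (Cont A N) (Omega A N) (BP_index A N) snd (pi_tau tp tm) (D_dom A N w) (D_op A N w)"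
  shows "spectral_triple (Cont A N) (Omega A N) (BP_index A N) snd (pi_tau tp tm) (D_dom A N w) (D_op A N w)"
  unfolding spectral_triple_def using ufm pi_tau_faithful[OF tp tm dense] by blast

theorem proposition4p4:
  fixes A :: "nat \<Rightarrow> nat \<Rightarrow> bool" and N :: nat
    and tp tm :: "nat list \<Rightarrow> nat \<Rightarrow> nat" and s :: real
  assumes no_zero_row: "\<forall>i<N. \<exists>j<N. A i j"
    and no_zero_col: "\<forall>j<N. \<exists>i<N. A i j"
    and tp_into: "tp ` words A N \<subseteq> Omega A N"
    and tm_into: "tm ` words A N \<subseteq> Omega A N"
    and comp: "comparable A N tp tm"
    and s_pos: "0 < s" and s_le: "s \<le> 1"
  shows "even_ufm (Cont A N) (Omega A N) (BP_index A N) snd (pi_tau tp tm)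
            (D_dom A N w_exp) (D_op A N w_exp)
       \<and> even_ufm (Cont A N) (Omega A N) (BP_index A N) snd (pi_tau tp tm)
            (D_dom A N (w_s s)) (D_op A N (w_s s))
       \<and> (1/2 \<le> s \<longrightarrow> theta_summable (Cont A N) (Omega A N) (BP_index A N) (pi_tau tp tm)
            (D_dom A N (w_s s)) (D_op A N (w_s s)))
       \<and> finitely_summable (Cont A N) (Omega A N) (BP_index A N) (pi_tau tp tm)
            (D_dom A N w_exp) (D_op A N w_exp)
       \<and> (sdense_in (tp ` words A N \<union> tm ` words A N) (Omega A N) \<longrightarrow>
            spectral_triple (Cont A N) (Omega A N) (BP_index A N) snd (pi_tau tp tm)
              (D_dom A N w_exp) (D_op A N w_exp)
          \<and> spectral_triple (Cont A N) (Omega A N) (BP_index A N) snd (pi_tau tp tm)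
              (D_dom A N (w_s s)) (D_op A N (w_s s)))"
proof -
  have exp_ufm: "even_ufm (Cont A N) (Omega A N) (BP_index A N) snd (pi_tau tp tm)
      (D_dom A N w_exp) (D_op A N w_exp)"
    by (rule even_ufm_BP[OF tp_into tm_into comp unbounded_weight_w_exp])
  moreover have s_ufm: "even_ufm (Cont A N) (Omega A N) (BP_index A N) snd (pi_tau tp tm)
      (D_dom A N (w_s s)) (D_op A N (w_s s))"
    by (rule even_ufm_BP[OF tp_into tm_into comp unbounded_weight_w_s[OF s_pos]])
  ultimately show ?thesis
    using theta_summable_BP_s[OF tp_into tm_into comp] finitely_summable_BP_exp[OF tp_into tm_into comp]
      spectral_triple_BP[OF tp_into tm_into] by blast
qed

end
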